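(* Let $\mathbb{X}=(X,\tau_{\mathbb{X}})$ be a topological space, $\Omega_0$ a viable base of $\mathbb{X}$, $\mathbb{D}=(D,\sqsubseteq)$ a bc-domain and $D_0\subseteq D$ a basis of $\mathbb{D}$. Then $[\widehat{\mathbb{X}}_{\Omega_0}\to\mathbb{D}]$ is a bc-domain with basis $$\widehat{\mathbb{B}}=\Big\{\bigsqcup_{i\in I}b_i\chi_{\mathcal{O}_{{\downarrow}W_i}} : I\text{ finite},\ \{b_i\chi_{\mathcal{O}_{{\downarrow}W_i}}\}_{i\in I}\text{ consistent},\ W_i\in\Omega_0,\ b_i\in D_0\Big\},$$ where ${\downarrow}W=\{U\in\Omega_0:U\subseteq W\}$. If moreover $\Omega_0$ is countable and $\mathbb{D}$ is $\omega$-continuous, then $[\widehat{\mathbb{X}}_{\Omega_0}\to\mathbb{D}]$ is $\omega$-continuous.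
   Context: A viable base of $\mathbb{X}$ is a family $\Omega_0\subseteq\tau_{\mathbb{X}}$ closed under finite unions and finite intersections (so $\emptyset,X\in\Omega_0$) which is a base of $\tau_{\mathbb{X}}$. $\mathrm{Idl}(\Omega_0)$ is the set of ideals (nonempty, downward closed, directed subsets) of $(\Omega_0,\subseteq)$, ordered by inclusion; a complete lattice. A completely prime filter of a complete lattice $L$ is a nonempty upward closed $F\subseteq L$ closed under binary meets with $\bigvee A\in F\Rightarrow A\cap F\neq\emptyset$. $\widehat{\mathbb{X}}_{\Omega_0}$ is the set $\widehat{X}$ of completely prime filters of $\mathrm{Idl}(\Omega_0)$ with the topology whose open sets are exactly $\mathcal{O}_I=\{y: I\in y\}$. A bc-domain is a dcpo with least element $\bot$, continuous (each element is the directed join of elements way-below it), in which every subset with an upper bound has a join; a basis of a dcpo is a subset $B$ such that for every $x$, $\{a\in B: a\ll x\}$ is directed with join $x$; $\omega$-continuous means having a countable basis. $[\widehat{\mathbb{X}}_{\Omega_0}\to\mathbb{D}]$ is the set of functions continuous into the Scott topology of $D$, ordered pointwise. $b\chi_O$ is the function with value $b$ on $O$ and $\bot$ elsewhere; a family $\{b_i\chi_{O_i}\}$ is consistent if for every $J\subseteq I$ with $\bigcap_{j\in J}O_j\neq\emptyset$ the set $\{b_j: j\in J\}$ has an upper bound; joins of such families are pointwise. *)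

theory Defs
  imports "HOL-Analysis.Analysis"
begin

definition is_lub :: "'d set \<Rightarrow> ('d \<Rightarrow> 'd \<Rightarrow> bool) \<Rightarrow> 'd set \<Rightarrow> 'd \<Rightarrow> bool" where
  "is_lub S le A s \<longleftrightarrow> s \<in> S \<and> (\<forall>a\<in>A. le a s) \<and> (\<forall>u\<in>S. (\<forall>a\<in>A. le a u) \<longrightarrow> le s u)"

definition is_glb :: "'d set \<Rightarrow> ('d \<Rightarrow> 'd \<Rightarrow> bool) \<Rightarrow> 'd set \<Rightarrow> 'd \<Rightarrow> bool" where
  "is_glb S le A s \<longleftrightarrow> s \<in> S \<and> (\<forall>a\<in>A. le s a) \<and> (\<forall>u\<in>S. (\<forall>a\<in>A. le u a) \<longrightarrow> le u s)"

definition dlub :: "'d set \<Rightarrow> ('d \<Rightarrow> 'd \<Rightarrow> bool) \<Rightarrow> 'd set \<Rightarrow> 'd" where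
  "dlub S le A = (THE s. is_lub S le A s)"

definition dbot :: "'d set \<Rightarrow> ('d \<Rightarrow> 'd \<Rightarrow> bool) \<Rightarrow> 'd" where
  "dbot S le = (THE b. b \<in> S \<and> (\<forall>x\<in>S. le b x))"

definition directed_in :: "'d set \<Rightarrow> ('d \<Rightarrow> 'd \<Rightarrow> bool) \<Rightarrow> 'd set \<Rightarrow> bool" where
  "directed_in S le A \<longleftrightarrow> A \<subseteq> S \<and> A \<noteq> {} \<and> (\<forall>x\<in>A. \<forall>y\<in>A. \<exists>z\<in>A. le x z \<and> le y z)"

definition poset_on :: "'d set \<Rightarrow> ('d \<Rightarrow> 'd \<Rightarrow> bool) \<Rightarrow> bool" where
  "poset_on S le \<longleftrightarrow> (\<forall>x\<in>S. le x x) \<and> (\<forall>x\<in>S. \<forall>y\<in>S. le x y \<and> le y x \<longrightarrow> x = y)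
     \<and> (\<forall>x\<in>S. \<forall>y\<in>S. \<forall>z\<in>S. le x y \<and> le y z \<longrightarrow> le x z)"

definition dcpo :: "'d set \<Rightarrow> ('d \<Rightarrow> 'd \<Rightarrow> bool) \<Rightarrow> bool" where
  "dcpo S le \<longleftrightarrow> poset_on S le \<and> (\<forall>A. directed_in S le A \<longrightarrow> (\<exists>s. is_lub S le A s))"

definition way_below :: "'d set \<Rightarrow> ('d \<Rightarrow> 'd \<Rightarrow> bool) \<Rightarrow> 'd \<Rightarrow> 'd \<Rightarrow> bool" where
  "way_below S le x y \<longleftrightarrow> x \<in> S \<and> y \<in> S \<and>
     (\<forall>A s. directed_in S le A \<longrightarrow> is_lub S le A s \<longrightarrow> le y s \<longrightarrow> (\<exists>a\<in>A. le x a))"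

definition continuous_dcpo :: "'d set \<Rightarrow> ('d \<Rightarrow> 'd \<Rightarrow> bool) \<Rightarrow> bool" where
  "continuous_dcpo S le \<longleftrightarrow> dcpo S le \<and>
     (\<forall>x\<in>S. directed_in S le {a\<in>S. way_below S le a x} \<and> is_lub S le {a\<in>S. way_below S le a x} x)"

definition bc_domain :: "'d set \<Rightarrow> ('d \<Rightarrow> 'd \<Rightarrow> bool) \<Rightarrow> bool" where
  "bc_domain S le \<longleftrightarrow> dcpo S le \<and> (\<exists>b\<in>S. \<forall>x\<in>S. le b x) \<and> continuous_dcpo S le \<and>
     (\<forall>A. A \<subseteq> S \<longrightarrow> (\<exists>u\<in>S. \<forall>a\<in>A. le a u) \<longrightarrow> (\<exists>s. is_lub S le A s))"

definition domain_basis :: "'d set \<Rightarrow> ('d \<Rightarrow> 'd \<Rightarrow> bool) \<Rightarrow> 'd set \<Rightarrow> bool" where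
  "domain_basis S le B \<longleftrightarrow> B \<subseteq> S \<and>
     (\<forall>x\<in>S. directed_in S le {a\<in>B. way_below S le a x} \<and> is_lub S le {a\<in>B. way_below S le a x} x)"

definition omega_continuous :: "'d set \<Rightarrow> ('d \<Rightarrow> 'd \<Rightarrow> bool) \<Rightarrow> bool" where
  "omega_continuous S le \<longleftrightarrow> dcpo S le \<and> (\<exists>B. countable B \<and> domain_basis S le B)"

definition scott_open :: "'d set \<Rightarrow> ('d \<Rightarrow> 'd \<Rightarrow> bool) \<Rightarrow> 'd set \<Rightarrow> bool" where
  "scott_open S le V \<longleftrightarrow> V \<subseteq> S \<and> (\<forall>x\<in>V. \<forall>y\<in>S. le x y \<longrightarrow> y \<in> V) \<and>
     (\<forall>A s. directed_in S le A \<longrightarrow> is_lub S le A s \<longrightarrow> s \<in> V \<longrightarrow> A \<inter> V \<noteq> {})"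

definition viable_base :: "'a topology \<Rightarrow> 'a set set \<Rightarrow> bool" where
  "viable_base T \<Omega> \<longleftrightarrow> \<Omega> \<subseteq> Collect (openin T) \<and> {} \<in> \<Omega> \<and> topspace T \<in> \<Omega> \<and>
     (\<forall>U\<in>\<Omega>. \<forall>V\<in>\<Omega>. U \<union> V \<in> \<Omega> \<and> U \<inter> V \<in> \<Omega>) \<and>
     (\<forall>U. openin T U \<longrightarrow> (\<exists>\<U>. \<U> \<subseteq> \<Omega> \<and> \<Union>\<U> = U))"

definition ideals :: "'a set set \<Rightarrow> 'a set set set" where
  "ideals \<Omega> = {I. I \<noteq> {} \<and> I \<subseteq> \<Omega> \<and> (\<forall>U\<in>I. \<forall>V\<in>\<Omega>. V \<subseteq> U \<longrightarrow> V \<in> I) \<and>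
                    (\<forall>U\<in>I. \<forall>V\<in>I. \<exists>W\<in>I. U \<subseteq> W \<and> V \<subseteq> W)}"

definition completely_prime_filter :: "'l set \<Rightarrow> ('l \<Rightarrow> 'l \<Rightarrow> bool) \<Rightarrow> 'l set \<Rightarrow> bool" where
  "completely_prime_filter L le F \<longleftrightarrow> F \<subseteq> L \<and> F \<noteq> {} \<and>
     (\<forall>x\<in>F. \<forall>y\<in>L. le x y \<longrightarrow> y \<in> F) \<and>
     (\<forall>x\<in>F. \<forall>y\<in>F. \<forall>m. is_glb L le {x, y} m \<longrightarrow> m \<in> F) \<and>
     (\<forall>A s. A \<subseteq> L \<longrightarrow> is_lub L le A s \<longrightarrow> s \<in> F \<longrightarrow> A \<inter> F \<noteq> {})"

definition Xhat :: "'a set set \<Rightarrow> 'a set set set set" where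
  "Xhat \<Omega> = {F. completely_prime_filter (ideals \<Omega>) (\<subseteq>) F}"

text \<open>The open sets of \<open>X\<^sub>hat\<close> are exactly the sets \<open>Oset \<Omega> I\<close>, \<open>I\<close> an ideal.\<close>
definition Oset :: "'a set set \<Rightarrow> 'a set set \<Rightarrow> 'a set set set set" where
  "Oset \<Omega> I = {y \<in> Xhat \<Omega>. I \<in> y}"

definition downset :: "'a set set \<Rightarrow> 'a set \<Rightarrow> 'a set set" where
  "downset \<Omega> W = {U \<in> \<Omega>. U \<subseteq> W}"

definition cont_fun :: "'a set set \<Rightarrow> 'd set \<Rightarrow> ('d \<Rightarrow> 'd \<Rightarrow> bool) \<Rightarrow> ('a set set set \<Rightarrow> 'd) \<Rightarrow> bool" where
  "cont_fun \<Omega> D le f \<longleftrightarrow> (\<forall>y\<in>Xhat \<Omega>. f y \<in> D) \<and>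
     (\<forall>V. scott_open D le V \<longrightarrow> (\<exists>I\<in>ideals \<Omega>. {y \<in> Xhat \<Omega>. f y \<in> V} = Oset \<Omega> I))"

definition fun_space :: "'a set set \<Rightarrow> 'd set \<Rightarrow> ('d \<Rightarrow> 'd \<Rightarrow> bool) \<Rightarrow> ('a set set set \<Rightarrow> 'd) set" where
  "fun_space \<Omega> D le = {f. f \<in> extensional (Xhat \<Omega>) \<and> cont_fun \<Omega> D le f}"

definition fun_le :: "'a set set \<Rightarrow> ('d \<Rightarrow> 'd \<Rightarrow> bool) \<Rightarrow> ('a set set set \<Rightarrow> 'd) \<Rightarrow> ('a set set set \<Rightarrow> 'd) \<Rightarrow> bool" where
  "fun_le \<Omega> le f g \<longleftrightarrow> (\<forall>y\<in>Xhat \<Omega>. le (f y) (g y))"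

definition step_fun :: "'a set set \<Rightarrow> 'd set \<Rightarrow> ('d \<Rightarrow> 'd \<Rightarrow> bool) \<Rightarrow> 'd \<Rightarrow> 'a set set set set \<Rightarrow> ('a set set set \<Rightarrow> 'd)" where
  "step_fun \<Omega> D le b Ob = (\<lambda>y. if y \<in> Xhat \<Omega> then (if y \<in> Ob then b else dbot D le) else undefined)"

definition consistent_family :: "'a set set \<Rightarrow> 'd set \<Rightarrow> ('d \<Rightarrow> 'd \<Rightarrow> bool) \<Rightarrow> 'i set \<Rightarrow> ('i \<Rightarrow> 'd) \<Rightarrow> ('i \<Rightarrow> 'a set set set set) \<Rightarrow> bool" where
  "consistent_family \<Omega> D le I b Ob \<longleftrightarrow>
     (\<forall>J. J \<subseteq> I \<longrightarrow> {y \<in> Xhat \<Omega>. \<forall>j\<in>J. y \<in> Ob j} \<noteq> {} \<longrightarrow> (\<exists>u\<in>D. \<forall>j\<in>J. le (b j) u))"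

definition step_join :: "'a set set \<Rightarrow> 'd set \<Rightarrow> ('d \<Rightarrow> 'd \<Rightarrow> bool) \<Rightarrow> 'i set \<Rightarrow> ('i \<Rightarrow> 'd) \<Rightarrow> ('i \<Rightarrow> 'a set set set set) \<Rightarrow> ('a set set set \<Rightarrow> 'd)" where
  "step_join \<Omega> D le I b Ob = (\<lambda>y. if y \<in> Xhat \<Omega> then dlub D le ((\<lambda>i. step_fun \<Omega> D le (b i) (Ob i) y) ` I) else undefined)"

definition basis_hat :: "'a set set \<Rightarrow> 'd set \<Rightarrow> ('d \<Rightarrow> 'd \<Rightarrow> bool) \<Rightarrow> 'd set \<Rightarrow> ('a set set set \<Rightarrow> 'd) set" where
  "basis_hat \<Omega> D le D0 =
     {step_join \<Omega> D le I b (\<lambda>i. Oset \<Omega> (downset \<Omega> (W i))) | (I :: nat set) b W.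
        finite I \<and> consistent_family \<Omega> D le I b (\<lambda>i. Oset \<Omega> (downset \<Omega> (W i))) \<and>
        (\<forall>i\<in>I. W i \<in> \<Omega> \<and> b i \<in> D0)}"

end

theory Submission
  imports Defs
begin

text \<open>The basic open sets \<open>O\<^sub>\<down>\<^sub>W\<close> of \<open>X\<^sub>hat\<close> are compact: a Zorn argument produces,
  for \<open>W \<notin> K\<close>, a prime ideal containing \<open>K\<close> but not \<open>W\<close>, whose complement is a point of
  \<open>O\<^sub>\<down>\<^sub>W\<close> outside \<open>O\<^sub>K\<close>. Bounded pointwise joins of continuous functions into a
  bc-domain are continuous, because being way below a value is an open condition; so the function
  space is a bounded-complete dcpo. By compactness, \<open>b \<chi>\<^bsub>O\<^sub>\<down>\<^sub>W\<^esub>\<close> is way below \<open>f\<close> as soon as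
  \<open>b \<ll> c \<ll> f\<close> on \<open>O\<^sub>\<down>\<^sub>W\<close>; interpolation in \<open>D\<close> and the cover of every open set by basic
  ones then show that \<open>f\<close> is the directed join of the finite consistent joins of such step
  functions with \<open>b \<in> D\<^sub>0\<close>. Countability of \<open>\<Omega>\<^sub>0\<close> and \<open>D\<^sub>0\<close> is inherited by this basis.\<close>

section \<open>Posets, continuous dcpos and bc-domains\<close>

lemma way_below_directedD:
  "way_below S le x y \<Longrightarrow> directed_in S le A \<Longrightarrow> is_lub S le A s \<Longrightarrow> le y s \<Longrightarrow> \<exists>a\<in>A. le x a"
  unfolding way_below_def by blast

context
  fixes S :: "'d set" and le :: "'d \<Rightarrow> 'd \<Rightarrow> bool"
  assumes po: "poset_on S le"
begin

lemma poset_refl: "x \<in> S \<Longrightarrow> le x x"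
  using po unfolding poset_on_def by blast

lemma poset_antisym: "x \<in> S \<Longrightarrow> y \<in> S \<Longrightarrow> le x y \<Longrightarrow> le y x \<Longrightarrow> x = y"
  using po unfolding poset_on_def by blast

lemma poset_trans: "le x y \<Longrightarrow> le y z \<Longrightarrow> x \<in> S \<Longrightarrow> y \<in> S \<Longrightarrow> z \<in> S \<Longrightarrow> le x z"
  using po unfolding poset_on_def by blast

lemma is_lub_unique: "is_lub S le A s \<Longrightarrow> is_lub S le A t \<Longrightarrow> s = t"
  unfolding is_lub_def using poset_antisym by blast

lemma dlub_eqI: "is_lub S le A s \<Longrightarrow> dlub S le A = s"
  unfolding dlub_def using is_lub_unique by blast

lemma is_lub_singleton: "x \<in> S \<Longrightarrow> is_lub S le {x} x"
  unfolding is_lub_def using poset_refl by auto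

lemma directed_singleton: "x \<in> S \<Longrightarrow> directed_in S le {x}"
  unfolding directed_in_def using poset_refl by auto

lemma way_below_imp_le:
  assumes "way_below S le x y" shows "le x y"
proof -
  have "y \<in> S" using assms unfolding way_below_def by blast
  then have "\<exists>a\<in>{y}. le x a"
    using assms is_lub_singleton directed_singleton poset_refl unfolding way_below_def by blast
  then show ?thesis by simp
qed

lemma way_below_le_trans:
  assumes "way_below S le x y" "le y z" "z \<in> S"
  shows "way_below S le x z"
  using assms poset_trans unfolding way_below_def is_lub_def by blast

lemma le_way_below_trans:
  assumes "x' \<in> S" "le x' x" "way_below S le x y"
  shows "way_below S le x' y"
  unfolding way_below_def
proof (intro conjI allI impI)
  show "x' \<in> S" "y \<in> S" using assms unfolding way_below_def by auto
  fix A s assume "directed_in S le A" "is_lub S le A s" "le y s"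
  then obtain a where "a \<in> A" "le x a" "a \<in> S"
    using assms(3) unfolding way_below_def directed_in_def by blast
  then show "\<exists>a\<in>A. le x' a" using assms poset_trans unfolding way_below_def by blast
qed

lemma way_below_least: "b \<in> S \<Longrightarrow> \<forall>x\<in>S. le b x \<Longrightarrow> y \<in> S \<Longrightarrow> way_below S le b y"
  unfolding way_below_def directed_in_def by blast

lemma way_below_lub2:
  assumes a1: "way_below S le a1 x" and a2: "way_below S le a2 x" and s: "is_lub S le {a1, a2} s"
  shows "way_below S le s x"
  unfolding way_below_def
proof (intro conjI allI impI)
  show "s \<in> S" "x \<in> S" using assms unfolding is_lub_def way_below_def by auto
  fix A t assume A: "directed_in S le A" and t: "is_lub S le A t" and "le x t"
  then obtain p1 p2 where p: "p1 \<in> A" "le a1 p1" "p2 \<in> A" "le a2 p2"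
    using a1 a2 unfolding way_below_def by meson
  then obtain p where "p \<in> A" "le p1 p" "le p2 p" using A unfolding directed_in_def by blast
  moreover have "a1 \<in> S" "a2 \<in> S" using a1 a2 unfolding way_below_def by auto
  ultimately have "le a1 p" "le a2 p" "p \<in> S" using p A poset_trans unfolding directed_in_def by blast+
  with s \<open>p \<in> A\<close> show "\<exists>a\<in>A. le s a" unfolding is_lub_def by blast
qed

lemma is_lub_pair_of_Un:
  assumes A: "is_lub S le A a" and B: "is_lub S le B b" and AB: "is_lub S le (A \<union> B) s"
    and "A \<subseteq> S" "B \<subseteq> S"
  shows "is_lub S le {a, b} s"
  unfolding is_lub_def
proof (intro conjI ballI impI)
  show "s \<in> S" "\<And>x. x \<in> {a, b} \<Longrightarrow> le x s" using A B AB unfolding is_lub_def by auto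
  fix u assume u: "u \<in> S" "\<forall>x\<in>{a, b}. le x u"
  have "a \<in> S" "b \<in> S" using A B unfolding is_lub_def by auto
  then have "\<forall>x\<in>A \<union> B. le x u"
    using u A B assms(4,5) poset_trans unfolding is_lub_def by (metis Un_iff insertCI subsetD)
  with AB u show "le s u" unfolding is_lub_def by blast
qed

lemma continuous_dcpo_if_basis:
  assumes dcpo: "dcpo S le" and B: "domain_basis S le B"
  shows "continuous_dcpo S le"
  unfolding continuous_dcpo_def
proof (intro conjI ballI dcpo)
  fix x assume x: "x \<in> S"
  let ?A = "{a\<in>B. way_below S le a x}" and ?C = "{a\<in>S. way_below S le a x}"
  have BS: "B \<subseteq> S" and dA: "directed_in S le ?A" and lA: "is_lub S le ?A x"
    using B x unfolding domain_basis_def by auto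
  have below_A: "\<exists>b\<in>?A. le a b" if "a \<in> ?C" for a
    using that dA lA poset_refl[OF x] unfolding way_below_def by blast
  show "directed_in S le ?C"
    unfolding directed_in_def
  proof (intro conjI ballI)
    show "?C \<subseteq> S" "?C \<noteq> {}" using dA BS unfolding directed_in_def by blast+
    fix a1 a2 assume "a1 \<in> ?C" "a2 \<in> ?C"
    then obtain b1 b2 where "b1 \<in> ?A" "le a1 b1" "b2 \<in> ?A" "le a2 b2" using below_A by blast
    moreover from this obtain b where "b \<in> ?A" "le b1 b" "le b2 b"
      using dA unfolding directed_in_def by blast
    ultimately show "\<exists>z\<in>?C. le a1 z \<and> le a2 z"
      using \<open>a1 \<in> ?C\<close> \<open>a2 \<in> ?C\<close> BS poset_trans by blast
  qed
  show "is_lub S le ?C x"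
    using lA BS x way_below_imp_le unfolding is_lub_def by blast
qed

end

context
  fixes S :: "'d set" and le :: "'d \<Rightarrow> 'd \<Rightarrow> bool"
  assumes cont: "continuous_dcpo S le"
begin

lemma continuous_dcpo_poset: "poset_on S le"
  using cont unfolding continuous_dcpo_def dcpo_def by blast

lemma continuous_dcpo_approx:
  "x \<in> S \<Longrightarrow> directed_in S le {a\<in>S. way_below S le a x} \<and> is_lub S le {a\<in>S. way_below S le a x} x"
  using cont unfolding continuous_dcpo_def by blast

text \<open>The elements way below some element way below \<open>x\<close> still form a directed set with join \<open>x\<close>.\<close>

lemma way_below_interpolate:
  assumes ax: "way_below S le a x"
  shows "\<exists>c\<in>S. way_below S le a c \<and> way_below S le c x"
proof -
  note po = continuous_dcpo_poset
  have x: "x \<in> S" using ax unfolding way_below_def by blast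
  let ?B = "{b\<in>S. \<exists>c\<in>S. way_below S le b c \<and> way_below S le c x}"
  have dX: "directed_in S le {c\<in>S. way_below S le c x}" and lX: "is_lub S le {c\<in>S. way_below S le c x} x"
    using continuous_dcpo_approx x by auto
  have dB: "directed_in S le ?B"
    unfolding directed_in_def
  proof (intro conjI ballI)
    show "?B \<subseteq> S" by blast
    obtain c where c: "c \<in> S" "way_below S le c x" using dX unfolding directed_in_def by blast
    then obtain b where "b \<in> S" "way_below S le b c"
      using continuous_dcpo_approx unfolding directed_in_def by blast
    with c show "?B \<noteq> {}" by blast
    fix b1 b2 assume "b1 \<in> ?B" "b2 \<in> ?B"
    then obtain c1 c2 where c12: "c1 \<in> S" "way_below S le b1 c1" "way_below S le c1 x"
      "c2 \<in> S" "way_below S le b2 c2" "way_below S le c2 x" by blast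
    then obtain c where c: "c \<in> S" "way_below S le c x" "le c1 c" "le c2 c"
      using dX unfolding directed_in_def by blast
    have "way_below S le b1 c" "way_below S le b2 c"
      using c12 c way_below_le_trans[OF po] by blast+
    then obtain b where "b \<in> S" "way_below S le b c" "le b1 b" "le b2 b"
      using continuous_dcpo_approx[OF c(1)] \<open>b1 \<in> ?B\<close> \<open>b2 \<in> ?B\<close> unfolding directed_in_def by blast
    with c show "\<exists>z\<in>?B. le b1 z \<and> le b2 z" by blast
  qed
  have lB: "is_lub S le ?B x"
    unfolding is_lub_def
  proof (intro conjI ballI impI x)
    show "le b x" if b: "b \<in> ?B" for b
    proof -
      obtain c where "c \<in> S" "way_below S le b c" "way_below S le c x" using b by blast
      then show ?thesis using b way_below_imp_le[OF po] poset_trans[OF po] x by blast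
    qed
    fix u assume u: "u \<in> S" "\<forall>b\<in>?B. le b u"
    have "le c u" if "c \<in> S" "way_below S le c x" for c
      using continuous_dcpo_approx[OF that(1)] u that unfolding is_lub_def by blast
    with lX u show "le x u" unfolding is_lub_def by blast
  qed
  obtain b where b: "b \<in> ?B" "le a b"
    using ax dB lB poset_refl[OF po x] unfolding way_below_def by blast
  then obtain c where "c \<in> S" "way_below S le b c" "way_below S le c x" by blast
  moreover have "a \<in> S" using ax unfolding way_below_def by blast
  ultimately show ?thesis using le_way_below_trans[OF po] b by blast
qed

lemma scott_open_way_above: "c \<in> S \<Longrightarrow> scott_open S le {z\<in>S. way_below S le c z}"
  unfolding scott_open_def
proof (intro conjI ballI allI impI)
  note po = continuous_dcpo_poset
  show "{z\<in>S. way_below S le c z} \<subseteq> S" by blast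
  show "y \<in> {z\<in>S. way_below S le c z}" if "x \<in> {z\<in>S. way_below S le c z}" "y \<in> S" "le x y" for x y
    using that way_below_le_trans[OF po] by blast
  fix A s assume A: "directed_in S le A" and s: "is_lub S le A s" "s \<in> {z\<in>S. way_below S le c z}"
  then obtain e where e: "e \<in> S" "way_below S le c e" "way_below S le e s"
    using way_below_interpolate by blast
  have "s \<in> S" using s unfolding is_lub_def by blast
  then obtain a where "a \<in> A" "le e a"
    using A s(1) e(3) poset_refl[OF po] unfolding way_below_def by blast
  moreover have "a \<in> S" using \<open>a \<in> A\<close> A unfolding directed_in_def by blast
  ultimately show "A \<inter> {z\<in>S. way_below S le c z} \<noteq> {}"
    using way_below_le_trans[OF po e(2)] by blast
qed

end

context
  fixes D :: "'d set" and le :: "'d \<Rightarrow> 'd \<Rightarrow> bool"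
  assumes bc: "bc_domain D le"
begin

lemma bc_domain_poset: "poset_on D le"
  using bc unfolding bc_domain_def dcpo_def by blast

lemma bc_domain_continuous: "continuous_dcpo D le"
  using bc unfolding bc_domain_def by blast

lemma bc_domain_bot: "dbot D le \<in> D" "x \<in> D \<Longrightarrow> le (dbot D le) x"
proof -
  obtain b where "b \<in> D" "\<forall>x\<in>D. le b x" using bc unfolding bc_domain_def by blast
  then have "\<exists>!b. b \<in> D \<and> (\<forall>x\<in>D. le b x)"
    using poset_antisym[OF bc_domain_poset] by blast
  then have "dbot D le \<in> D \<and> (\<forall>x\<in>D. le (dbot D le) x)"
    unfolding dbot_def by (rule theI')
  then show "dbot D le \<in> D" "x \<in> D \<Longrightarrow> le (dbot D le) x" by blast+
qed

lemma bc_domain_bounded_lub: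
  "A \<subseteq> D \<Longrightarrow> u \<in> D \<Longrightarrow> \<forall>a\<in>A. le a u \<Longrightarrow> is_lub D le A (dlub D le A)"
  using bc dlub_eqI[OF bc_domain_poset] unfolding bc_domain_def by metis

lemma bc_domain_directed_lub: "directed_in D le A \<Longrightarrow> is_lub D le A (dlub D le A)"
  using bc dlub_eqI[OF bc_domain_poset] unfolding bc_domain_def dcpo_def by metis

lemma finite_joins_way_below_members:
  assumes A: "A \<subseteq> D" and s: "is_lub D le A s"
  defines "P \<equiv> {c\<in>D. \<exists>a\<in>A. way_below D le c a}"
  shows "C \<subseteq> P \<Longrightarrow> is_lub D le C (dlub D le C)"
    and "directed_in D le {dlub D le C | C. finite C \<and> C \<subseteq> P}"
    and "is_lub D le {dlub D le C | C. finite C \<and> C \<subseteq> P} s"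
proof -
  note po = bc_domain_poset
  define Q where "Q = {dlub D le C | C. finite C \<and> C \<subseteq> P}"
  have sD: "s \<in> D" using s unfolding is_lub_def by blast
  have P_le_s: "le c s" if "c \<in> P" for c
    using that s A way_below_imp_le[OF po] poset_trans[OF po] unfolding P_def is_lub_def by blast
  show CL: "is_lub D le C (dlub D le C)" if "C \<subseteq> P" for C
    using bc_domain_bounded_lub[OF _ sD] that P_le_s unfolding P_def by blast
  show "directed_in D le {dlub D le C | C. finite C \<and> C \<subseteq> P}"
    unfolding directed_in_def Q_def[symmetric]
  proof (intro conjI ballI)
    show "Q \<subseteq> D" using CL unfolding Q_def is_lub_def by blast
    show "Q \<noteq> {}" unfolding Q_def by blast
    fix q1 q2 assume "q1 \<in> Q" "q2 \<in> Q"
    then obtain C1 C2 where C: "finite C1" "C1 \<subseteq> P" "q1 = dlub D le C1"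
      "finite C2" "C2 \<subseteq> P" "q2 = dlub D le C2" unfolding Q_def by auto
    then have "dlub D le (C1 \<union> C2) \<in> Q" unfolding Q_def by blast
    moreover have "le q1 (dlub D le (C1 \<union> C2))" "le q2 (dlub D le (C1 \<union> C2))"
      using CL[of C1] CL[of C2] CL[of "C1 \<union> C2"] C unfolding is_lub_def by auto
    ultimately show "\<exists>z\<in>Q. le q1 z \<and> le q2 z" by blast
  qed
  show "is_lub D le {dlub D le C | C. finite C \<and> C \<subseteq> P} s"
    unfolding is_lub_def Q_def[symmetric]
  proof (intro conjI ballI impI sD)
    show "le q s" if "q \<in> Q" for q
      using that CL P_le_s sD unfolding Q_def is_lub_def by blast
    fix v assume v: "v \<in> D" "\<forall>q\<in>Q. le q v"
    have "le c v" if "c \<in> P" for c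
    proof -
      have "dlub D le {c} \<in> Q" using that unfolding Q_def by blast
      moreover have "dlub D le {c} = c"
        using that dlub_eqI[OF po is_lub_singleton[OF po]] unfolding P_def by blast
      ultimately show ?thesis using v by auto
    qed
    then have "le a v" if "a \<in> A" for a
      using that A v continuous_dcpo_approx[OF bc_domain_continuous, of a]
      unfolding P_def is_lub_def by blast
    with s v show "le s v" unfolding is_lub_def by blast
  qed
qed

lemma scott_open_bounded_lub_finite:
  assumes V: "scott_open D le V" and A: "A \<subseteq> D" and u: "u \<in> D" "\<forall>a\<in>A. le a u"
    and sV: "dlub D le A \<in> V"
  obtains C where "finite C" "\<forall>c\<in>C. \<exists>a\<in>A. way_below D le c a"
    "\<And>v. v \<in> D \<Longrightarrow> \<forall>c\<in>C. le c v \<Longrightarrow> v \<in> V"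
proof -
  note joins = finite_joins_way_below_members[OF A bc_domain_bounded_lub[OF A u]]
  obtain C where C: "finite C" "C \<subseteq> {c\<in>D. \<exists>a\<in>A. way_below D le c a}" "dlub D le C \<in> V"
    using V joins(2,3) sV unfolding scott_open_def by blast
  show thesis
  proof (rule that[OF C(1)])
    show "\<forall>c\<in>C. \<exists>a\<in>A. way_below D le c a" using C(2) by blast
    fix v assume "v \<in> D" "\<forall>c\<in>C. le c v"
    with joins(1)[OF C(2)] C(3) V show "v \<in> V" unfolding is_lub_def scott_open_def by blast
  qed
qed

end

section \<open>Ideals of a lattice of sets and the space of completely prime filters\<close>

lemma idealsI:
  assumes "I \<noteq> {}" "I \<subseteq> \<Omega>" "\<And>U V. U \<in> I \<Longrightarrow> V \<in> \<Omega> \<Longrightarrow> V \<subseteq> U \<Longrightarrow> V \<in> I"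
    "\<And>U V. U \<in> I \<Longrightarrow> V \<in> I \<Longrightarrow> \<exists>W\<in>I. U \<subseteq> W \<and> V \<subseteq> W"
  shows "I \<in> ideals \<Omega>"
  using assms unfolding ideals_def by blast

lemma idealsD:
  assumes "I \<in> ideals \<Omega>"
  shows "I \<noteq> {}" "I \<subseteq> \<Omega>" "\<And>U V. U \<in> I \<Longrightarrow> V \<in> \<Omega> \<Longrightarrow> V \<subseteq> U \<Longrightarrow> V \<in> I"
    "\<And>U V. U \<in> I \<Longrightarrow> V \<in> I \<Longrightarrow> \<exists>W\<in>I. U \<subseteq> W \<and> V \<subseteq> W"
  using assms unfolding ideals_def mem_Collect_eq by simp_all

lemma ideals_poset: "poset_on (ideals \<Omega>) (\<subseteq>)"
  unfolding poset_on_def by auto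

lemma XhatD:
  assumes "y \<in> Xhat \<Omega>"
  shows "y \<subseteq> ideals \<Omega>" "y \<noteq> {}" "\<And>I J. I \<in> y \<Longrightarrow> J \<in> ideals \<Omega> \<Longrightarrow> I \<subseteq> J \<Longrightarrow> J \<in> y"
    "\<And>I J m. I \<in> y \<Longrightarrow> J \<in> y \<Longrightarrow> is_glb (ideals \<Omega>) (\<subseteq>) {I, J} m \<Longrightarrow> m \<in> y"
    "\<And>A s. A \<subseteq> ideals \<Omega> \<Longrightarrow> is_lub (ideals \<Omega>) (\<subseteq>) A s \<Longrightarrow> s \<in> y \<Longrightarrow> \<exists>I\<in>A. I \<in> y"
proof -
  have "completely_prime_filter (ideals \<Omega>) (\<subseteq>) y" using assms unfolding Xhat_def by simp
  note F = this[unfolded completely_prime_filter_def, THEN conjunct2, THEN conjunct2]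
  show "y \<subseteq> ideals \<Omega>" "y \<noteq> {}"
    using \<open>completely_prime_filter _ _ y\<close> unfolding completely_prime_filter_def by simp_all
  show "\<And>I J. I \<in> y \<Longrightarrow> J \<in> ideals \<Omega> \<Longrightarrow> I \<subseteq> J \<Longrightarrow> J \<in> y"
    "\<And>I J m. I \<in> y \<Longrightarrow> J \<in> y \<Longrightarrow> is_glb (ideals \<Omega>) (\<subseteq>) {I, J} m \<Longrightarrow> m \<in> y"
    using F by blast+
  show "\<And>A s. A \<subseteq> ideals \<Omega> \<Longrightarrow> is_lub (ideals \<Omega>) (\<subseteq>) A s \<Longrightarrow> s \<in> y \<Longrightarrow> \<exists>I\<in>A. I \<in> y"
    using F[THEN conjunct2, THEN conjunct2] by blast
qed

lemma XhatI:
  assumes "y \<subseteq> ideals \<Omega>" "y \<noteq> {}" "\<And>I J. I \<in> y \<Longrightarrow> J \<in> ideals \<Omega> \<Longrightarrow> I \<subseteq> J \<Longrightarrow> J \<in> y"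
    "\<And>I J m. I \<in> y \<Longrightarrow> J \<in> y \<Longrightarrow> is_glb (ideals \<Omega>) (\<subseteq>) {I, J} m \<Longrightarrow> m \<in> y"
    "\<And>A s. A \<subseteq> ideals \<Omega> \<Longrightarrow> is_lub (ideals \<Omega>) (\<subseteq>) A s \<Longrightarrow> s \<in> y \<Longrightarrow> \<exists>I\<in>A. I \<in> y"
  shows "y \<in> Xhat \<Omega>"
  unfolding Xhat_def completely_prime_filter_def mem_Collect_eq
proof (intro conjI assms(1,2))
  show "\<forall>x\<in>y. \<forall>z\<in>ideals \<Omega>. x \<subseteq> z \<longrightarrow> z \<in> y"
    "\<forall>x\<in>y. \<forall>z\<in>y. \<forall>m. is_glb (ideals \<Omega>) (\<subseteq>) {x, z} m \<longrightarrow> m \<in> y"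
    using assms(3,4) by blast+
  show "\<forall>A s. A \<subseteq> ideals \<Omega> \<longrightarrow> is_lub (ideals \<Omega>) (\<subseteq>) A s \<longrightarrow> s \<in> y \<longrightarrow> A \<inter> y \<noteq> {}"
    using assms(5) by blast
qed

lemma Oset_subset_Xhat: "Oset \<Omega> I \<subseteq> Xhat \<Omega>"
  unfolding Oset_def by blast

definition Xhat_open :: "'a set set \<Rightarrow> 'a set set set set \<Rightarrow> bool" where
  "Xhat_open \<Omega> S \<longleftrightarrow> (\<exists>I\<in>ideals \<Omega>. S = Oset \<Omega> I)"

definition ideal_join :: "'a set set \<Rightarrow> 'a set set set \<Rightarrow> 'a set set" where
  "ideal_join \<Omega> A = {V\<in>\<Omega>. \<exists>F. finite F \<and> F \<subseteq> \<Union>A \<and> V \<subseteq> \<Union>F}"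

definition open_ideal :: "'a set set \<Rightarrow> 'a set set set set \<Rightarrow> 'a set set" where
  "open_ideal \<Omega> S = {W\<in>\<Omega>. Oset \<Omega> (downset \<Omega> W) \<subseteq> S}"

locale set_lattice =
  fixes \<Omega> :: "'a set set"
  assumes empty_mem: "{} \<in> \<Omega>"
    and Un_mem: "U \<in> \<Omega> \<Longrightarrow> V \<in> \<Omega> \<Longrightarrow> U \<union> V \<in> \<Omega>"
    and Int_mem: "U \<in> \<Omega> \<Longrightarrow> V \<in> \<Omega> \<Longrightarrow> U \<inter> V \<in> \<Omega>"
begin

lemma Union_finite_mem: "finite F \<Longrightarrow> F \<subseteq> \<Omega> \<Longrightarrow> \<Union>F \<in> \<Omega>"
  by (induction F rule: finite_induct) (auto simp: empty_mem Un_mem)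

lemma ideal_empty_mem: "I \<in> ideals \<Omega> \<Longrightarrow> {} \<in> I"
  using idealsD(1,3) empty_mem by blast

lemma ideal_Un_mem:
  assumes I: "I \<in> ideals \<Omega>" and "U \<in> I" "V \<in> I"
  shows "U \<union> V \<in> I"
proof -
  obtain W where "W \<in> I" "U \<subseteq> W" "V \<subseteq> W" using idealsD(4)[OF I] assms by blast
  moreover have "U \<in> \<Omega>" "V \<in> \<Omega>" using idealsD(2)[OF I] assms by auto
  ultimately show ?thesis using idealsD(3)[OF I] Un_mem by blast
qed

lemma ideal_Union_finite_mem: "finite F \<Longrightarrow> I \<in> ideals \<Omega> \<Longrightarrow> F \<subseteq> I \<Longrightarrow> \<Union>F \<in> I"
  by (induction F rule: finite_induct) (auto simp: ideal_empty_mem ideal_Un_mem)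

lemma Omega_ideal: "\<Omega> \<in> ideals \<Omega>"
  by (rule idealsI) (use empty_mem Un_mem in blast)+

lemma empty_ideal: "{{}} \<in> ideals \<Omega>"
  by (rule idealsI) (use empty_mem in blast)+

lemma downset_ideal: "W \<in> \<Omega> \<Longrightarrow> downset \<Omega> W \<in> ideals \<Omega>"
  unfolding downset_def by (rule idealsI) (use empty_mem Un_mem in blast)+

lemma downset_subset_ideal: "I \<in> ideals \<Omega> \<Longrightarrow> W \<in> I \<Longrightarrow> downset \<Omega> W \<subseteq> I"
  unfolding downset_def using idealsD(3) by blast

lemma Int_ideal:
  assumes I: "I \<in> ideals \<Omega>" and J: "J \<in> ideals \<Omega>"
  shows "I \<inter> J \<in> ideals \<Omega>"
proof (rule idealsI)
  show "I \<inter> J \<noteq> {}" using ideal_empty_mem I J by blast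
  show "I \<inter> J \<subseteq> \<Omega>" using idealsD(2)[OF I] by blast
  show "V \<in> I \<inter> J" if "U \<in> I \<inter> J" "V \<in> \<Omega>" "V \<subseteq> U" for U V
    using that idealsD(3)[OF I] idealsD(3)[OF J] by blast
  show "\<exists>W\<in>I \<inter> J. U \<subseteq> W \<and> V \<subseteq> W" if "U \<in> I \<inter> J" "V \<in> I \<inter> J" for U V
    using that ideal_Un_mem[OF I] ideal_Un_mem[OF J] by blast
qed

lemma directed_Union_ideal:
  assumes K: "\<K> \<subseteq> ideals \<Omega>" "\<K> \<noteq> {}"
    and dir: "\<And>I J. I \<in> \<K> \<Longrightarrow> J \<in> \<K> \<Longrightarrow> \<exists>L\<in>\<K>. I \<subseteq> L \<and> J \<subseteq> L"
  shows "\<Union>\<K> \<in> ideals \<Omega>"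
proof (rule idealsI)
  show "\<Union>\<K> \<noteq> {}" using K ideal_empty_mem by blast
  show "\<Union>\<K> \<subseteq> \<Omega>" using K idealsD(2) by blast
  show "V \<in> \<Union>\<K>" if "U \<in> \<Union>\<K>" "V \<in> \<Omega>" "V \<subseteq> U" for U V
    using that K idealsD(3) by blast
  fix U V assume "U \<in> \<Union>\<K>" "V \<in> \<Union>\<K>"
  then obtain I J where "I \<in> \<K>" "U \<in> I" "J \<in> \<K>" "V \<in> J" by blast
  moreover from this obtain L where "L \<in> \<K>" "I \<subseteq> L" "J \<subseteq> L" using dir by blast
  ultimately show "\<exists>W\<in>\<Union>\<K>. U \<subseteq> W \<and> V \<subseteq> W" using K idealsD(4)[of L \<Omega> U V] by blast
qed

lemma ideal_join_ideal:
  assumes A: "A \<subseteq> ideals \<Omega>"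
  shows "ideal_join \<Omega> A \<in> ideals \<Omega>"
proof (rule idealsI)
  have "{} \<in> ideal_join \<Omega> A" unfolding ideal_join_def using empty_mem by blast
  then show "ideal_join \<Omega> A \<noteq> {}" by blast
  show "ideal_join \<Omega> A \<subseteq> \<Omega>" unfolding ideal_join_def by blast
  show "V \<in> ideal_join \<Omega> A" if "U \<in> ideal_join \<Omega> A" "V \<in> \<Omega>" "V \<subseteq> U" for U V
    using that unfolding ideal_join_def by blast
  fix U V assume "U \<in> ideal_join \<Omega> A" "V \<in> ideal_join \<Omega> A"
  then obtain F G where F: "finite F" "F \<subseteq> \<Union>A" "U \<subseteq> \<Union>F"
    and G: "finite G" "G \<subseteq> \<Union>A" "V \<subseteq> \<Union>G"
    unfolding ideal_join_def by blast
  have "\<Union>A \<subseteq> \<Omega>" using A idealsD(2) by blast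
  then have "F \<union> G \<subseteq> \<Omega>" using F G by blast
  then have "\<Union>(F \<union> G) \<in> \<Omega>" using F G Union_finite_mem[of "F \<union> G"] by simp
  moreover have "finite (F \<union> G)" "F \<union> G \<subseteq> \<Union>A" using F G by auto
  ultimately have "\<Union>(F \<union> G) \<in> ideal_join \<Omega> A" unfolding ideal_join_def by blast
  moreover have "U \<subseteq> \<Union>(F \<union> G)" "V \<subseteq> \<Union>(F \<union> G)" using F G by auto
  ultimately show "\<exists>W\<in>ideal_join \<Omega> A. U \<subseteq> W \<and> V \<subseteq> W" by blast
qed

lemma is_lub_ideal_join:
  assumes A: "A \<subseteq> ideals \<Omega>"
  shows "is_lub (ideals \<Omega>) (\<subseteq>) A (ideal_join \<Omega> A)"
  unfolding is_lub_def
proof (intro conjI ballI impI ideal_join_ideal[OF A])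
  show "I \<subseteq> ideal_join \<Omega> A" if "I \<in> A" for I
  proof
    fix U assume "U \<in> I"
    moreover have "U \<in> \<Omega>" using that A idealsD(2) \<open>U \<in> I\<close> by blast
    moreover have "finite {U}" "{U} \<subseteq> \<Union>A" "U \<subseteq> \<Union>{U}" using that \<open>U \<in> I\<close> by auto
    ultimately show "U \<in> ideal_join \<Omega> A" unfolding ideal_join_def by blast
  qed
  fix K assume K: "K \<in> ideals \<Omega>" "\<forall>I\<in>A. I \<subseteq> K"
  show "ideal_join \<Omega> A \<subseteq> K"
  proof
    fix V assume "V \<in> ideal_join \<Omega> A"
    then obtain F where F: "finite F" "F \<subseteq> \<Union>A" "V \<subseteq> \<Union>F" "V \<in> \<Omega>"
      unfolding ideal_join_def by blast
    then have "F \<subseteq> K" using K(2) by auto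
    then have "\<Union>F \<in> K" using ideal_Union_finite_mem[OF F(1) K(1)] by simp
    then show "V \<in> K" using idealsD(3)[OF K(1)] F by blast
  qed
qed

lemma is_lub_ideals_eq:
  "A \<subseteq> ideals \<Omega> \<Longrightarrow> is_lub (ideals \<Omega>) (\<subseteq>) A s \<Longrightarrow> s = ideal_join \<Omega> A"
  using is_lub_unique[OF ideals_poset] is_lub_ideal_join by blast

lemma is_glb_ideals_eq:
  assumes "I \<in> ideals \<Omega>" "J \<in> ideals \<Omega>" "is_glb (ideals \<Omega>) (\<subseteq>) {I, J} m"
  shows "m = I \<inter> J"
proof -
  have "m \<subseteq> I" "m \<subseteq> J" "\<forall>u\<in>ideals \<Omega>. u \<subseteq> I \<and> u \<subseteq> J \<longrightarrow> u \<subseteq> m"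
    using assms(3) unfolding is_glb_def by auto
  then show ?thesis using Int_ideal[OF assms(1,2)] by blast
qed

lemma Xhat_Int:
  assumes y: "y \<in> Xhat \<Omega>" and "I \<in> y" "J \<in> y"
  shows "I \<inter> J \<in> y"
proof -
  have "I \<in> ideals \<Omega>" "J \<in> ideals \<Omega>" using XhatD(1)[OF y] assms by auto
  then have "is_glb (ideals \<Omega>) (\<subseteq>) {I, J} (I \<inter> J)"
    unfolding is_glb_def using Int_ideal by blast
  then show ?thesis using XhatD(4)[OF y] assms by blast
qed

lemma Xhat_Omega:
  assumes y: "y \<in> Xhat \<Omega>"
  shows "\<Omega> \<in> y"
proof -
  obtain I where "I \<in> y" using XhatD(2)[OF y] by blast
  moreover have "I \<subseteq> \<Omega>" using idealsD(2) XhatD(1)[OF y] \<open>I \<in> y\<close> by blast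
  ultimately show ?thesis using XhatD(3)[OF y _ Omega_ideal] by blast
qed

lemma Oset_Omega: "Oset \<Omega> \<Omega> = Xhat \<Omega>"
  unfolding Oset_def using Xhat_Omega by blast

lemma Oset_empty_ideal: "Oset \<Omega> {{}} = {}"
proof -
  have "is_lub (ideals \<Omega>) (\<subseteq>) {} {{}}"
    unfolding is_lub_def using empty_ideal ideal_empty_mem by blast
  then show ?thesis unfolding Oset_def using XhatD(5) by blast
qed

lemma Oset_mono: "y \<in> Oset \<Omega> I \<Longrightarrow> I \<subseteq> J \<Longrightarrow> J \<in> ideals \<Omega> \<Longrightarrow> y \<in> Oset \<Omega> J"
  unfolding Oset_def using XhatD(3) by blast

lemma is_lub_downsets:
  assumes I: "I \<in> ideals \<Omega>"
  shows "is_lub (ideals \<Omega>) (\<subseteq>) (downset \<Omega> ` I) I"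
  unfolding is_lub_def
proof (intro conjI ballI impI I)
  show "J \<subseteq> I" if "J \<in> downset \<Omega> ` I" for J
    using that downset_subset_ideal[OF I] by blast
  fix K assume K: "K \<in> ideals \<Omega>" "\<forall>J\<in>downset \<Omega> ` I. J \<subseteq> K"
  show "I \<subseteq> K"
  proof
    fix W assume "W \<in> I"
    then have "W \<in> downset \<Omega> W" using idealsD(2)[OF I] unfolding downset_def by auto
    then show "W \<in> K" using K \<open>W \<in> I\<close> by blast
  qed
qed

lemma Oset_downset_cover:
  assumes I: "I \<in> ideals \<Omega>" and y: "y \<in> Oset \<Omega> I"
  obtains W where "W \<in> I" "y \<in> Oset \<Omega> (downset \<Omega> W)"
proof -
  have sub: "downset \<Omega> ` I \<subseteq> ideals \<Omega>" using downset_ideal idealsD(2)[OF I] by blast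
  have "y \<in> Xhat \<Omega>" "I \<in> y" using y unfolding Oset_def by auto
  then have "\<exists>J\<in>downset \<Omega> ` I. J \<in> y" using XhatD(5)[OF _ sub is_lub_downsets[OF I]] by simp
  then obtain W where "W \<in> I" "downset \<Omega> W \<in> y" by blast
  with \<open>y \<in> Xhat \<Omega>\<close> show thesis using that unfolding Oset_def by blast
qed

lemma Xhat_open_Xhat: "Xhat_open \<Omega> (Xhat \<Omega>)"
  unfolding Xhat_open_def using Oset_Omega Omega_ideal by metis

lemma Xhat_open_Oset: "I \<in> ideals \<Omega> \<Longrightarrow> Xhat_open \<Omega> (Oset \<Omega> I)"
  unfolding Xhat_open_def by blast

lemma Xhat_open_empty: "Xhat_open \<Omega> {}"
  using Xhat_open_Oset[OF empty_ideal] Oset_empty_ideal by simp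

lemma Xhat_open_subset: "Xhat_open \<Omega> S \<Longrightarrow> S \<subseteq> Xhat \<Omega>"
  unfolding Xhat_open_def using Oset_subset_Xhat by blast

lemma Xhat_open_Int:
  assumes "Xhat_open \<Omega> S" "Xhat_open \<Omega> T"
  shows "Xhat_open \<Omega> (S \<inter> T)"
proof -
  obtain I J where IJ: "I \<in> ideals \<Omega>" "J \<in> ideals \<Omega>" "S = Oset \<Omega> I" "T = Oset \<Omega> J"
    using assms unfolding Xhat_open_def by blast
  have "S \<inter> T = Oset \<Omega> (I \<inter> J)"
    using Xhat_Int Oset_mono[OF _ _ IJ(1)] Oset_mono[OF _ _ IJ(2)] Int_ideal[OF IJ(1,2)]
    unfolding IJ by (auto simp: Oset_def)
  then show ?thesis using Xhat_open_Oset Int_ideal[OF IJ(1,2)] by simp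
qed

lemma Xhat_open_INT:
  "finite C \<Longrightarrow> \<forall>c\<in>C. Xhat_open \<Omega> (P c) \<Longrightarrow> Xhat_open \<Omega> {y\<in>Xhat \<Omega>. \<forall>c\<in>C. y \<in> P c}"
proof (induction C rule: finite_induct)
  case empty
  then show ?case using Xhat_open_Xhat by simp
next
  case (insert c C)
  then have "{y\<in>Xhat \<Omega>. \<forall>c\<in>insert c C. y \<in> P c} = P c \<inter> {y\<in>Xhat \<Omega>. \<forall>c\<in>C. y \<in> P c}"
    using Xhat_open_subset by auto
  then show ?case using Xhat_open_Int insert by simp
qed

lemma Xhat_open_Union:
  assumes "\<forall>S\<in>\<S>. Xhat_open \<Omega> S"
  shows "Xhat_open \<Omega> (\<Union>\<S>)"
proof -
  define A where "A = {I\<in>ideals \<Omega>. Oset \<Omega> I \<in> \<S>}"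
  have A: "A \<subseteq> ideals \<Omega>" unfolding A_def by blast
  have "\<Union>\<S> = Oset \<Omega> (ideal_join \<Omega> A)"
  proof (intro equalityI subsetI)
    fix y assume "y \<in> \<Union>\<S>"
    then obtain S where "S \<in> \<S>" "y \<in> S" by blast
    moreover obtain I where "I \<in> ideals \<Omega>" "S = Oset \<Omega> I"
      using assms \<open>S \<in> \<S>\<close> unfolding Xhat_open_def by blast
    ultimately have "I \<in> A" "y \<in> Oset \<Omega> I" unfolding A_def by auto
    moreover have "I \<subseteq> ideal_join \<Omega> A"
      using is_lub_ideal_join[OF A] \<open>I \<in> A\<close> unfolding is_lub_def by blast
    ultimately show "y \<in> Oset \<Omega> (ideal_join \<Omega> A)"
      using Oset_mono ideal_join_ideal[OF A] by blast
  next
    fix y assume "y \<in> Oset \<Omega> (ideal_join \<Omega> A)"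
    then have y: "y \<in> Xhat \<Omega>" "ideal_join \<Omega> A \<in> y" unfolding Oset_def by auto
    then obtain I where "I \<in> A" "I \<in> y" using XhatD(5)[OF y(1) A is_lub_ideal_join[OF A]] by blast
    with y show "y \<in> \<Union>\<S>" unfolding A_def Oset_def by blast
  qed
  then show ?thesis using Xhat_open_Oset ideal_join_ideal[OF A] by simp
qed

lemma Xhat_openI_local:
  assumes "S \<subseteq> Xhat \<Omega>" "\<forall>y\<in>S. \<exists>U. Xhat_open \<Omega> U \<and> y \<in> U \<and> U \<subseteq> S"
  shows "Xhat_open \<Omega> S"
proof -
  have "S = \<Union>{U. Xhat_open \<Omega> U \<and> U \<subseteq> S}" using assms by blast
  then show ?thesis using Xhat_open_Union[of "{U. Xhat_open \<Omega> U \<and> U \<subseteq> S}"] by auto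
qed

subsection \<open>Separating points of \<open>X\<^sub>hat\<close> by prime ideals\<close>

lemma ideal_extend:
  assumes M: "M \<in> ideals \<Omega>" and U: "U \<in> \<Omega>"
  shows "{X\<in>\<Omega>. \<exists>m\<in>M. X \<subseteq> m \<union> U} \<in> ideals \<Omega>"
proof (rule idealsI)
  let ?MU = "{X\<in>\<Omega>. \<exists>m\<in>M. X \<subseteq> m \<union> U}"
  have "{} \<in> ?MU" using ideal_empty_mem[OF M] empty_mem by blast
  then show "?MU \<noteq> {}" by blast
  show "?MU \<subseteq> \<Omega>" by blast
  show "V \<in> ?MU" if Y: "Y \<in> ?MU" and V: "V \<in> \<Omega>" "V \<subseteq> Y" for Y V
  proof -
    obtain m where "m \<in> M" "Y \<subseteq> m \<union> U" using Y by blast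
    with V show ?thesis by blast
  qed
  fix Y V assume "Y \<in> ?MU" "V \<in> ?MU"
  then obtain m1 m2 where m: "m1 \<in> M" "Y \<subseteq> m1 \<union> U" "m2 \<in> M" "V \<subseteq> m2 \<union> U" "Y \<in> \<Omega>" "V \<in> \<Omega>"
    by blast
  obtain m where "m \<in> M" "m1 \<subseteq> m" "m2 \<subseteq> m" using idealsD(4)[OF M m(1,3)] by blast
  with m have "Y \<union> V \<subseteq> m \<union> U" by auto
  then have "Y \<union> V \<in> ?MU" using \<open>m \<in> M\<close> Un_mem[OF m(5,6)] by blast
  then show "\<exists>W\<in>?MU. Y \<subseteq> W \<and> V \<subseteq> W" by blast
qed

lemma maximal_ideal_avoiding:
  assumes K: "K \<in> ideals \<Omega>" and "W \<notin> K"
  obtains M where "M \<in> ideals \<Omega>" "K \<subseteq> M" "W \<notin> M"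
    "\<And>X. X \<in> ideals \<Omega> \<Longrightarrow> M \<subseteq> X \<Longrightarrow> W \<notin> X \<Longrightarrow> X = M"
proof -
  define \<A> where "\<A> = {M \<in> ideals \<Omega>. K \<subseteq> M \<and> W \<notin> M}"
  have "\<exists>U\<in>\<A>. \<forall>X\<in>C. X \<subseteq> U" if C: "C \<in> chains \<A>" for C
  proof (cases "C = {}")
    case True
    then show ?thesis using assms unfolding \<A>_def by blast
  next
    case False
    have CA: "C \<subseteq> \<A>" using C chainsD2 by blast
    then have "C \<subseteq> ideals \<Omega>" unfolding \<A>_def by blast
    moreover have "\<exists>L\<in>C. I \<subseteq> L \<and> J \<subseteq> L" if "I \<in> C" "J \<in> C" for I J
      using chainsD[OF C that] that by blast
    ultimately have "\<Union>C \<in> ideals \<Omega>" using directed_Union_ideal[of C] False by blast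
    moreover have "K \<subseteq> \<Union>C" "W \<notin> \<Union>C" using False CA unfolding \<A>_def by auto
    ultimately have "\<Union>C \<in> \<A>" unfolding \<A>_def by blast
    then show ?thesis by blast
  qed
  then have "\<forall>C\<in>chains \<A>. \<exists>U\<in>\<A>. \<forall>X\<in>C. X \<subseteq> U" by blast
  from Zorn_Lemma2[OF this] obtain M where "M \<in> \<A>" and max: "\<forall>X\<in>\<A>. M \<subseteq> X \<longrightarrow> X = M"
    by blast
  then have M: "M \<in> ideals \<Omega>" "K \<subseteq> M" "W \<notin> M" unfolding \<A>_def by auto
  moreover have "X = M" if "X \<in> ideals \<Omega>" "M \<subseteq> X" "W \<notin> X" for X
    using max that M(2) unfolding \<A>_def by blast
  ultimately show thesis by (rule that)
qed

text \<open>Adjoining any \<open>U \<notin> M\<close> to a maximal ideal avoiding \<open>W\<close> captures \<open>W\<close>; two such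
  captures combine to one for \<open>U \<inter> V\<close>.\<close>

lemma maximal_ideal_avoiding_prime:
  assumes W: "W \<in> \<Omega>" and M: "M \<in> ideals \<Omega>" "W \<notin> M"
    and max: "\<And>X. X \<in> ideals \<Omega> \<Longrightarrow> M \<subseteq> X \<Longrightarrow> W \<notin> X \<Longrightarrow> X = M"
    and UV: "U \<in> \<Omega>" "V \<in> \<Omega>" "U \<inter> V \<in> M"
  shows "U \<in> M \<or> V \<in> M"
proof -
  have capture: "\<exists>m\<in>M. W \<subseteq> m \<union> U" if U: "U \<in> \<Omega>" "U \<notin> M" for U
  proof (rule ccontr)
    assume no_capture: "\<not> (\<exists>m\<in>M. W \<subseteq> m \<union> U)"
    define MU where "MU = {X\<in>\<Omega>. \<exists>m\<in>M. X \<subseteq> m \<union> U}"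
    have "M \<subseteq> MU" unfolding MU_def using idealsD(2)[OF M(1)] by blast
    moreover have "W \<notin> MU" unfolding MU_def using no_capture by blast
    moreover have "MU \<in> ideals \<Omega>" using ideal_extend[OF M(1) U(1)] unfolding MU_def .
    ultimately have "MU = M" using max by blast
    moreover have "U \<in> MU" unfolding MU_def using U ideal_empty_mem[OF M(1)] by blast
    ultimately show False using U by blast
  qed
  show ?thesis
  proof (rule ccontr)
    assume "\<not> (U \<in> M \<or> V \<in> M)"
    then obtain m1 m2 where m: "m1 \<in> M" "W \<subseteq> m1 \<union> U" "m2 \<in> M" "W \<subseteq> m2 \<union> V"
      using capture UV by meson
    obtain m where "m \<in> M" "m1 \<subseteq> m" "m2 \<subseteq> m" using idealsD(4)[OF M(1) m(1,3)] by blast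
    with m have "W \<subseteq> m \<union> (U \<inter> V)" by blast
    moreover have "m \<union> (U \<inter> V) \<in> M" using ideal_Un_mem[OF M(1) \<open>m \<in> M\<close> UV(3)] .
    ultimately show False using idealsD(3)[OF M(1)] W M(2) by blast
  qed
qed

lemma Xhat_prime_ideal_complement:
  assumes M: "M \<in> ideals \<Omega>" "M \<noteq> \<Omega>"
    and prime: "\<And>U V. U \<in> \<Omega> \<Longrightarrow> V \<in> \<Omega> \<Longrightarrow> U \<inter> V \<in> M \<Longrightarrow> U \<in> M \<or> V \<in> M"
  shows "{I \<in> ideals \<Omega>. \<not> I \<subseteq> M} \<in> Xhat \<Omega>"
proof (rule XhatI)
  let ?z = "{I \<in> ideals \<Omega>. \<not> I \<subseteq> M}"
  show "?z \<subseteq> ideals \<Omega>" by blast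
  have "\<not> \<Omega> \<subseteq> M" using M idealsD(2)[OF M(1)] by blast
  then show "?z \<noteq> {}" using Omega_ideal by blast
  show "J \<in> ?z" if "I \<in> ?z" "J \<in> ideals \<Omega>" "I \<subseteq> J" for I J
    using that by blast
  show "m \<in> ?z" if I: "I \<in> ?z" and J: "J \<in> ?z" and m: "is_glb (ideals \<Omega>) (\<subseteq>) {I, J} m" for I J m
  proof -
    obtain U1 U2 where U: "U1 \<in> I" "U1 \<notin> M" "U2 \<in> J" "U2 \<notin> M" using I J by blast
    have "U1 \<in> \<Omega>" "U2 \<in> \<Omega>" using U I J idealsD(2) by blast+
    then have "U1 \<inter> U2 \<in> I \<inter> J" "U1 \<inter> U2 \<notin> M"
      using U I J idealsD(3)[of I \<Omega>] idealsD(3)[of J \<Omega>] Int_mem prime by blast+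
    then show ?thesis using is_glb_ideals_eq[OF _ _ m] Int_ideal I J by blast
  qed
  fix A s assume A: "A \<subseteq> ideals \<Omega>" and s: "is_lub (ideals \<Omega>) (\<subseteq>) A s" "s \<in> ?z"
  obtain V where "V \<in> s" "V \<notin> M" using s(2) by blast
  then obtain F where F: "finite F" "F \<subseteq> \<Union>A" "V \<subseteq> \<Union>F" "V \<in> \<Omega>"
    using is_lub_ideals_eq[OF A s(1)] unfolding ideal_join_def by blast
  have "\<not> F \<subseteq> M"
  proof
    assume "F \<subseteq> M"
    then have "\<Union>F \<in> M" using ideal_Union_finite_mem[OF F(1) M(1)] by blast
    then show False using idealsD(3)[OF M(1)] F \<open>V \<notin> M\<close> by blast
  qed
  then obtain X I where "X \<in> F" "X \<notin> M" "I \<in> A" "X \<in> I" using F(2) by blast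
  then show "\<exists>I\<in>A. I \<in> ?z" using A by blast
qed

lemma Oset_downset_subset_iff:
  assumes W: "W \<in> \<Omega>" and K: "K \<in> ideals \<Omega>"
  shows "Oset \<Omega> (downset \<Omega> W) \<subseteq> Oset \<Omega> K \<longleftrightarrow> W \<in> K"
proof
  assume sub: "Oset \<Omega> (downset \<Omega> W) \<subseteq> Oset \<Omega> K"
  show "W \<in> K"
  proof (rule ccontr)
    assume "W \<notin> K"
    obtain M where M: "M \<in> ideals \<Omega>" "K \<subseteq> M" "W \<notin> M"
      and max: "\<And>X. X \<in> ideals \<Omega> \<Longrightarrow> M \<subseteq> X \<Longrightarrow> W \<notin> X \<Longrightarrow> X = M"
      using maximal_ideal_avoiding[OF K \<open>W \<notin> K\<close>] by blast
    have prime: "U \<in> M \<or> V \<in> M" if "U \<in> \<Omega>" "V \<in> \<Omega>" "U \<inter> V \<in> M" for U V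
      using maximal_ideal_avoiding_prime[OF W M(1,3) max that] .
    define z where "z = {I \<in> ideals \<Omega>. \<not> I \<subseteq> M}"
    have "M \<noteq> \<Omega>" using W M by blast
    then have "z \<in> Xhat \<Omega>" unfolding z_def using Xhat_prime_ideal_complement[OF M(1) _ prime] by blast
    moreover have "W \<in> downset \<Omega> W" using W unfolding downset_def by blast
    then have "downset \<Omega> W \<in> z" using downset_ideal[OF W] M unfolding z_def by blast
    ultimately have "z \<in> Oset \<Omega> K" using sub unfolding Oset_def by blast
    then show False using M unfolding z_def Oset_def by blast
  qed
next
  assume "W \<in> K"
  then show "Oset \<Omega> (downset \<Omega> W) \<subseteq> Oset \<Omega> K"
    using Oset_mono[OF _ downset_subset_ideal[OF K] K] by blast
qed

lemma Oset_open_ideal: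
  assumes "Xhat_open \<Omega> S"
  shows "open_ideal \<Omega> S \<in> ideals \<Omega>" "Oset \<Omega> (open_ideal \<Omega> S) = S"
proof -
  obtain I where I: "I \<in> ideals \<Omega>" "S = Oset \<Omega> I" using assms unfolding Xhat_open_def by blast
  have "open_ideal \<Omega> S = I"
    unfolding open_ideal_def I(2) using Oset_downset_subset_iff[OF _ I(1)] idealsD(2)[OF I(1)] by blast
  then show "open_ideal \<Omega> S \<in> ideals \<Omega>" "Oset \<Omega> (open_ideal \<Omega> S) = S" using I by simp_all
qed

lemma open_ideal_mono: "S \<subseteq> T \<Longrightarrow> open_ideal \<Omega> S \<subseteq> open_ideal \<Omega> T"
  unfolding open_ideal_def by blast

lemma Oset_downset_compact:
  assumes W: "W \<in> \<Omega>" and S: "\<S> \<noteq> {}" "\<forall>S\<in>\<S>. Xhat_open \<Omega> S"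
    and dir: "\<And>S T. S \<in> \<S> \<Longrightarrow> T \<in> \<S> \<Longrightarrow> \<exists>R\<in>\<S>. S \<subseteq> R \<and> T \<subseteq> R"
    and cover: "Oset \<Omega> (downset \<Omega> W) \<subseteq> \<Union>\<S>"
  obtains S where "S \<in> \<S>" "Oset \<Omega> (downset \<Omega> W) \<subseteq> S"
proof -
  define \<K> where "\<K> = open_ideal \<Omega> ` \<S>"
  have K: "\<K> \<subseteq> ideals \<Omega>" "\<K> \<noteq> {}" unfolding \<K>_def using S Oset_open_ideal(1) by auto
  have "\<exists>L\<in>\<K>. I \<subseteq> L \<and> J \<subseteq> L" if IJ: "I \<in> \<K>" "J \<in> \<K>" for I J
  proof -
    obtain S T where "S \<in> \<S>" "T \<in> \<S>" "I = open_ideal \<Omega> S" "J = open_ideal \<Omega> T"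
      using IJ unfolding \<K>_def by blast
    moreover obtain R where "R \<in> \<S>" "S \<subseteq> R" "T \<subseteq> R" using dir calculation(1,2) by blast
    ultimately have "open_ideal \<Omega> R \<in> \<K>" "I \<subseteq> open_ideal \<Omega> R" "J \<subseteq> open_ideal \<Omega> R"
      using open_ideal_mono unfolding \<K>_def by simp_all
    then show ?thesis by blast
  qed
  then have UK: "\<Union>\<K> \<in> ideals \<Omega>" using directed_Union_ideal[OF K] by blast
  have "Oset \<Omega> (downset \<Omega> W) \<subseteq> Oset \<Omega> (\<Union>\<K>)"
  proof
    fix y assume "y \<in> Oset \<Omega> (downset \<Omega> W)"
    then obtain S where S': "S \<in> \<S>" "y \<in> S" using cover by blast
    then have "y \<in> Oset \<Omega> (open_ideal \<Omega> S)" using Oset_open_ideal(2) S(2) by simp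
    moreover have "open_ideal \<Omega> S \<subseteq> \<Union>\<K>" using S'(1) unfolding \<K>_def by blast
    ultimately show "y \<in> Oset \<Omega> (\<Union>\<K>)" using Oset_mono[OF _ _ UK] by blast
  qed
  then have "W \<in> \<Union>\<K>" using Oset_downset_subset_iff[OF W UK] by blast
  then obtain S where "S \<in> \<S>" "W \<in> open_ideal \<Omega> S" unfolding \<K>_def by blast
  moreover from this have "Oset \<Omega> (downset \<Omega> W) \<subseteq> S" unfolding open_ideal_def by simp
  ultimately show thesis using that by blast
qed

end

section \<open>The function space\<close>

definition pointwise_lub ::
  "'a set set \<Rightarrow> 'd set \<Rightarrow> ('d \<Rightarrow> 'd \<Rightarrow> bool) \<Rightarrow> ('a set set set \<Rightarrow> 'd) set \<Rightarrow> 'a set set set \<Rightarrow> 'd" where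
  "pointwise_lub \<Omega> D le A = (\<lambda>y. if y \<in> Xhat \<Omega> then dlub D le ((\<lambda>f. f y) ` A) else undefined)"

locale fun_space_setting = set_lattice \<Omega> for \<Omega> :: "'a set set" +
  fixes D :: "'d set" and le :: "'d \<Rightarrow> 'd \<Rightarrow> bool"
  assumes bc: "bc_domain D le"
begin

abbreviation "\<F> \<equiv> fun_space \<Omega> D le"
abbreviation "fle \<equiv> fun_le \<Omega> le"

lemmas D_poset = bc_domain_poset[OF bc]

lemma fun_space_val: "f \<in> \<F> \<Longrightarrow> y \<in> Xhat \<Omega> \<Longrightarrow> f y \<in> D"
  unfolding fun_space_def cont_fun_def by blast

lemma fun_space_extensional: "f \<in> \<F> \<Longrightarrow> f \<in> extensional (Xhat \<Omega>)"
  unfolding fun_space_def by blast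

lemma fun_space_open_preimage:
  "f \<in> \<F> \<Longrightarrow> scott_open D le V \<Longrightarrow> Xhat_open \<Omega> {y\<in>Xhat \<Omega>. f y \<in> V}"
  unfolding fun_space_def cont_fun_def Xhat_open_def by blast

lemma fun_spaceI:
  assumes "f \<in> extensional (Xhat \<Omega>)" "\<And>y. y \<in> Xhat \<Omega> \<Longrightarrow> f y \<in> D"
    "\<And>V. scott_open D le V \<Longrightarrow> Xhat_open \<Omega> {y\<in>Xhat \<Omega>. f y \<in> V}"
  shows "f \<in> \<F>"
  using assms unfolding fun_space_def cont_fun_def Xhat_open_def by blast

lemma fun_space_poset: "poset_on \<F> fle"
  unfolding poset_on_def
proof (intro conjI ballI impI)
  fix f assume "f \<in> \<F>"
  then show "fle f f" unfolding fun_le_def using fun_space_val poset_refl[OF D_poset] by blast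
next
  fix f g assume f: "f \<in> \<F>" and g: "g \<in> \<F>" and "fle f g \<and> fle g f"
  then have "f y = g y" if "y \<in> Xhat \<Omega>" for y
    using that fun_space_val poset_antisym[OF D_poset] unfolding fun_le_def by blast
  then show "f = g" using extensionalityI fun_space_extensional[OF f] fun_space_extensional[OF g] by blast
next
  fix f g h assume "f \<in> \<F>" "g \<in> \<F>" "h \<in> \<F>" "fle f g \<and> fle g h"
  then show "fle f h"
    unfolding fun_le_def using fun_space_val poset_trans[OF D_poset] by blast
qed

lemma Xhat_open_way_above_preimage:
  assumes "f \<in> \<F>" "c \<in> D"
  shows "Xhat_open \<Omega> {y\<in>Xhat \<Omega>. way_below D le c (f y)}"
proof -
  have "{y\<in>Xhat \<Omega>. way_below D le c (f y)} = {y\<in>Xhat \<Omega>. f y \<in> {z\<in>D. way_below D le c z}}"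
    using fun_space_val[OF assms(1)] by auto
  then show ?thesis
    using fun_space_open_preimage[OF assms(1) scott_open_way_above[OF bc_domain_continuous[OF bc] assms(2)]]
    by simp
qed

lemma is_lub_fun_spaceI:
  assumes A: "A \<subseteq> \<F>" and h: "h \<in> \<F>"
    and lub: "\<And>y. y \<in> Xhat \<Omega> \<Longrightarrow> is_lub D le ((\<lambda>f. f y) ` A) (h y)"
  shows "is_lub \<F> fle A h"
  unfolding is_lub_def fun_le_def
proof (intro conjI ballI impI h)
  show "le (f y) (h y)" if "f \<in> A" "y \<in> Xhat \<Omega>" for f y
    using that lub unfolding is_lub_def by blast
  show "le (h y) (u y)" if "u \<in> \<F>" "\<forall>f\<in>A. \<forall>y\<in>Xhat \<Omega>. le (f y) (u y)" "y \<in> Xhat \<Omega>" for u y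
    using that lub[OF that(3)] fun_space_val[OF that(1,3)] unfolding is_lub_def by blast
qed

lemma pointwise_lub_at:
  assumes A: "A \<subseteq> \<F>" and u: "u \<in> D" "\<forall>f\<in>A. le (f y) u" and y: "y \<in> Xhat \<Omega>"
  shows "is_lub D le ((\<lambda>f. f y) ` A) (pointwise_lub \<Omega> D le A y)"
proof -
  have "(\<lambda>f. f y) ` A \<subseteq> D" using A fun_space_val y by blast
  moreover have "\<forall>a\<in>(\<lambda>f. f y) ` A. le a u" using u(2) by blast
  ultimately show ?thesis using bc_domain_bounded_lub[OF bc _ u(1)] y unfolding pointwise_lub_def by simp
qed

text \<open>If the join of the values at \<open>y\<close> lies in a Scott open \<open>V\<close>, finitely many elements way
  below members of the family force this, and being way below the value of a continuous function
  is an open condition.\<close>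

lemma pointwise_lub_neighbourhood:
  assumes A: "A \<subseteq> \<F>" and lub: "\<And>z. z \<in> Xhat \<Omega> \<Longrightarrow> is_lub D le ((\<lambda>f. f z) ` A) (h z)"
    and V: "scott_open D le V" and y: "y \<in> Xhat \<Omega>" "h y \<in> V"
  obtains U where "Xhat_open \<Omega> U" "y \<in> U" "U \<subseteq> {z\<in>Xhat \<Omega>. h z \<in> V}"
proof -
  have hD: "h z \<in> D" if "z \<in> Xhat \<Omega>" for z using lub[OF that] unfolding is_lub_def by blast
  have Ay: "(\<lambda>f. f y) ` A \<subseteq> D" using A fun_space_val y(1) by blast
  have ub: "\<forall>a\<in>(\<lambda>f. f y) ` A. le a (h y)" using lub[OF y(1)] unfolding is_lub_def by blast
  have "dlub D le ((\<lambda>f. f y) ` A) \<in> V" using y dlub_eqI[OF D_poset lub[OF y(1)]] by simp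
  then obtain C where C: "finite C" "\<forall>c\<in>C. \<exists>a\<in>(\<lambda>f. f y) ` A. way_below D le c a"
    and forces: "\<And>v. v \<in> D \<Longrightarrow> \<forall>c\<in>C. le c v \<Longrightarrow> v \<in> V"
    using scott_open_bounded_lub_finite[OF bc V Ay hD[OF y(1)] ub] by blast
  then have "\<forall>c\<in>C. \<exists>f\<in>A. way_below D le c (f y)" by blast
  then obtain g where g: "\<forall>c\<in>C. g c \<in> A \<and> way_below D le c (g c y)"
    by (metis (no_types, lifting) bchoice)
  define P where "P c = {z\<in>Xhat \<Omega>. way_below D le c (g c z)}" for c
  define U where "U = {z\<in>Xhat \<Omega>. \<forall>c\<in>C. z \<in> P c}"
  have "Xhat_open \<Omega> (P c)" if "c \<in> C" for c
  proof -
    have "c \<in> D" using g that unfolding way_below_def by blast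
    then show ?thesis unfolding P_def using Xhat_open_way_above_preimage g that A by blast
  qed
  then have "Xhat_open \<Omega> U" unfolding U_def using Xhat_open_INT[OF C(1)] by blast
  moreover have "y \<in> U" unfolding U_def P_def using y g by blast
  moreover have "h z \<in> V" if z: "z \<in> U" for z
  proof -
    have zX: "z \<in> Xhat \<Omega>" using z unfolding U_def by blast
    have "le c (h z)" if c: "c \<in> C" for c
    proof -
      have "way_below D le c (g c z)" and gA: "g c \<in> A" using z g c unfolding U_def P_def by blast+
      then have "le c (g c z)" "c \<in> D" "g c z \<in> D"
        using way_below_imp_le[OF D_poset] unfolding way_below_def by blast+
      moreover have "le (g c z) (h z)" using lub[OF zX] gA unfolding is_lub_def by blast
      ultimately show ?thesis using poset_trans[OF D_poset] hD[OF zX] by blast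
    qed
    then show ?thesis using forces hD[OF zX] by blast
  qed
  moreover have "U \<subseteq> Xhat \<Omega>" unfolding U_def by blast
  ultimately show thesis using that by blast
qed

lemma pointwise_lub_mem:
  assumes A: "A \<subseteq> \<F>" and bound: "\<And>y. y \<in> Xhat \<Omega> \<Longrightarrow> \<exists>u\<in>D. \<forall>f\<in>A. le (f y) u"
  shows "pointwise_lub \<Omega> D le A \<in> \<F>"
proof (rule fun_spaceI)
  let ?h = "pointwise_lub \<Omega> D le A"
  have lub: "is_lub D le ((\<lambda>f. f y) ` A) (?h y)" if "y \<in> Xhat \<Omega>" for y
    using bound[OF that] pointwise_lub_at[OF A _ _ that] by blast
  show "?h \<in> extensional (Xhat \<Omega>)" unfolding pointwise_lub_def extensional_def by simp
  show "?h y \<in> D" if "y \<in> Xhat \<Omega>" for y using lub[OF that] unfolding is_lub_def by blast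
  fix V assume V: "scott_open D le V"
  have "\<exists>U. Xhat_open \<Omega> U \<and> y \<in> U \<and> U \<subseteq> {y\<in>Xhat \<Omega>. ?h y \<in> V}"
    if "y \<in> {y\<in>Xhat \<Omega>. ?h y \<in> V}" for y
    using pointwise_lub_neighbourhood[OF A lub V] that by (metis (no_types, lifting) mem_Collect_eq)
  then show "Xhat_open \<Omega> {y\<in>Xhat \<Omega>. ?h y \<in> V}" by (intro Xhat_openI_local) auto
qed

lemma is_lub_pointwise_lub:
  assumes "A \<subseteq> \<F>" "\<And>y. y \<in> Xhat \<Omega> \<Longrightarrow> \<exists>u\<in>D. \<forall>f\<in>A. le (f y) u"
  shows "is_lub \<F> fle A (pointwise_lub \<Omega> D le A)"
  using is_lub_fun_spaceI[OF assms(1) pointwise_lub_mem[OF assms]] pointwise_lub_at[OF assms(1)] assms(2)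
  by blast

lemma directed_evaluations:
  assumes G: "directed_in \<F> fle G" and y: "y \<in> Xhat \<Omega>"
  shows "directed_in D le ((\<lambda>f. f y) ` G)"
  unfolding directed_in_def
proof (intro conjI ballI)
  show "(\<lambda>f. f y) ` G \<subseteq> D" "(\<lambda>f. f y) ` G \<noteq> {}"
    using G fun_space_val[OF _ y] unfolding directed_in_def by blast+
  fix a1 a2 assume "a1 \<in> (\<lambda>f. f y) ` G" "a2 \<in> (\<lambda>f. f y) ` G"
  then obtain g1 g2 where g: "g1 \<in> G" "a1 = g1 y" "g2 \<in> G" "a2 = g2 y" by blast
  then obtain g where "g \<in> G" "fle g1 g" "fle g2 g" using G unfolding directed_in_def by meson
  with g y show "\<exists>c\<in>(\<lambda>f. f y) ` G. le a1 c \<and> le a2 c" unfolding fun_le_def by blast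
qed

lemma directed_bounded_evaluations:
  assumes "directed_in \<F> fle G" "y \<in> Xhat \<Omega>"
  shows "\<exists>u\<in>D. \<forall>f\<in>G. le (f y) u"
  using bc_domain_directed_lub[OF bc directed_evaluations[OF assms]] unfolding is_lub_def by blast

lemma is_lub_directed:
  assumes G: "directed_in \<F> fle G"
  shows "is_lub \<F> fle G (pointwise_lub \<Omega> D le G)"
proof (rule is_lub_pointwise_lub)
  show "G \<subseteq> \<F>" using G unfolding directed_in_def by blast
qed (rule directed_bounded_evaluations[OF G])

lemma is_lub_directed_at:
  assumes G: "directed_in \<F> fle G" and g: "is_lub \<F> fle G g" and y: "y \<in> Xhat \<Omega>"
  shows "is_lub D le ((\<lambda>f. f y) ` G) (g y)"
proof -
  have "g = pointwise_lub \<Omega> D le G"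
    using is_lub_unique[OF fun_space_poset g is_lub_directed[OF G]] .
  moreover have "G \<subseteq> \<F>" using G unfolding directed_in_def by blast
  ultimately show ?thesis
    using pointwise_lub_at directed_bounded_evaluations[OF G y] y by blast
qed

lemma fun_space_dcpo: "dcpo \<F> fle"
  unfolding dcpo_def using fun_space_poset is_lub_directed by blast

lemma fun_space_bot: "\<exists>b\<in>\<F>. \<forall>f\<in>\<F>. fle b f"
proof -
  have "is_lub \<F> fle {} (pointwise_lub \<Omega> D le {})"
    using is_lub_pointwise_lub[of "{}"] bc_domain_bot[OF bc] by blast
  then show ?thesis unfolding is_lub_def by blast
qed

lemma fun_space_bounded_lub:
  assumes A: "A \<subseteq> \<F>" and u: "u \<in> \<F>" "\<forall>f\<in>A. fle f u"
  shows "\<exists>s. is_lub \<F> fle A s"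
proof -
  have "\<exists>v\<in>D. \<forall>f\<in>A. le (f y) v" if "y \<in> Xhat \<Omega>" for y
    using u that fun_space_val[OF u(1) that] unfolding fun_le_def by blast
  then show ?thesis using is_lub_pointwise_lub[OF A] by blast
qed

lemma step_fun_mem:
  assumes b: "b \<in> D" and I: "I \<in> ideals \<Omega>"
  shows "step_fun \<Omega> D le b (Oset \<Omega> I) \<in> \<F>"
proof (rule fun_spaceI)
  let ?s = "step_fun \<Omega> D le b (Oset \<Omega> I)"
  show "?s \<in> extensional (Xhat \<Omega>)" unfolding step_fun_def extensional_def by simp
  show "?s y \<in> D" if "y \<in> Xhat \<Omega>" for y
    unfolding step_fun_def using that b bc_domain_bot[OF bc] by simp
  fix V assume V: "scott_open D le V"
  then have bot_V: "b \<in> V" if "dbot D le \<in> V"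
    using that b bc_domain_bot[OF bc] unfolding scott_open_def by blast
  consider "dbot D le \<in> V" | "dbot D le \<notin> V" "b \<in> V" | "dbot D le \<notin> V" "b \<notin> V" by blast
  then show "Xhat_open \<Omega> {y\<in>Xhat \<Omega>. ?s y \<in> V}"
  proof cases
    case 1
    then have "{y\<in>Xhat \<Omega>. ?s y \<in> V} = Xhat \<Omega>" using bot_V unfolding step_fun_def by auto
    then show ?thesis using Xhat_open_Xhat by metis
  next
    case 2
    then have "{y\<in>Xhat \<Omega>. ?s y \<in> V} = Oset \<Omega> I" using Oset_subset_Xhat unfolding step_fun_def by auto
    then show ?thesis using Xhat_open_Oset[OF I] by metis
  next
    case 3
    then have "{y\<in>Xhat \<Omega>. ?s y \<in> V} = {}" unfolding step_fun_def by auto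
    then show ?thesis using Xhat_open_empty by metis
  qed
qed

lemma is_lub_step_join:
  assumes I: "\<forall>i\<in>I. b i \<in> D \<and> Ob i \<in> Oset \<Omega> ` ideals \<Omega>"
    and cons: "consistent_family \<Omega> D le I b Ob"
  shows "is_lub \<F> fle ((\<lambda>i. step_fun \<Omega> D le (b i) (Ob i)) ` I) (step_join \<Omega> D le I b Ob)"
proof -
  let ?S = "(\<lambda>i. step_fun \<Omega> D le (b i) (Ob i)) ` I"
  have "step_join \<Omega> D le I b Ob = pointwise_lub \<Omega> D le ?S"
    unfolding step_join_def pointwise_lub_def image_image ..
  moreover have "?S \<subseteq> \<F>"
  proof (rule image_subsetI)
    fix i assume "i \<in> I"
    then obtain K where "K \<in> ideals \<Omega>" "Ob i = Oset \<Omega> K" "b i \<in> D" using I by blast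
    then show "step_fun \<Omega> D le (b i) (Ob i) \<in> \<F>" using step_fun_mem by simp
  qed
  moreover have "\<exists>u\<in>D. \<forall>f\<in>?S. le (f y) u" if y: "y \<in> Xhat \<Omega>" for y
  proof -
    let ?J = "{i\<in>I. y \<in> Ob i}"
    have "{z\<in>Xhat \<Omega>. \<forall>j\<in>?J. z \<in> Ob j} \<noteq> {}" using y by blast
    moreover have "?J \<subseteq> I" by blast
    ultimately obtain u where u: "u \<in> D" "\<forall>j\<in>?J. le (b j) u"
      using cons unfolding consistent_family_def by blast
    then have "le (step_fun \<Omega> D le (b i) (Ob i) y) u" if "i \<in> I" for i
      using that u y bc_domain_bot[OF bc] unfolding step_fun_def by (cases "y \<in> Ob i") simp_all
    with u show ?thesis by blast
  qed
  ultimately show ?thesis using is_lub_pointwise_lub by simp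
qed

abbreviation "basic_step b W \<equiv> step_fun \<Omega> D le b (Oset \<Omega> (downset \<Omega> W))"
abbreviation "basic_steps P \<equiv> (\<lambda>(b, W). basic_step b W) ` P"

lemma basic_step_mem: "b \<in> D \<Longrightarrow> W \<in> \<Omega> \<Longrightarrow> basic_step b W \<in> \<F>"
  using step_fun_mem downset_ideal by blast

lemma basic_step_le:
  assumes "b \<in> D" "f \<in> \<F>" "\<forall>z\<in>Oset \<Omega> (downset \<Omega> W). le b (f z)"
  shows "fle (basic_step b W) f"
  unfolding fun_le_def step_fun_def
  using assms fun_space_val bc_domain_bot[OF bc] by auto

lemma directed_way_above_cover:
  assumes G: "directed_in \<F> fle G" and g: "is_lub \<F> fle G g" and fg: "fle f g"
    and b_c: "way_below D le b c" and above: "\<forall>z\<in>Z. way_below D le c (f z)" and Z: "Z \<subseteq> Xhat \<Omega>"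
  shows "Z \<subseteq> (\<Union>h\<in>G. {z\<in>Xhat \<Omega>. way_below D le b (h z)})"
proof
  fix z assume z: "z \<in> Z"
  then have zX: "z \<in> Xhat \<Omega>" using Z by blast
  have gF: "g \<in> \<F>" using g unfolding is_lub_def by blast
  have "le (f z) (g z)" using fg zX unfolding fun_le_def by blast
  then have "way_below D le c (g z)"
    using above z way_below_le_trans[OF D_poset] fun_space_val[OF gF zX] by blast
  from way_below_directedD[OF this directed_evaluations[OF G zX] is_lub_directed_at[OF G g zX]
      poset_refl[OF D_poset fun_space_val[OF gF zX]]]
  obtain h where h: "h \<in> G" "le c (h z)" by blast
  moreover have "h z \<in> D" using h(1) G fun_space_val[OF _ zX] unfolding directed_in_def by blast
  ultimately have "way_below D le b (h z)" using way_below_le_trans[OF D_poset b_c] by blast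
  with h zX show "z \<in> (\<Union>h\<in>G. {z\<in>Xhat \<Omega>. way_below D le b (h z)})" by blast
qed

text \<open>Compactness of \<open>Oset \<Omega> (downset \<Omega> W)\<close> is what makes the step function way below \<open>f\<close>.\<close>

lemma basic_step_way_below:
  assumes f: "f \<in> \<F>" and W: "W \<in> \<Omega>" and b_c: "way_below D le b c"
    and above: "\<forall>z\<in>Oset \<Omega> (downset \<Omega> W). way_below D le c (f z)"
  shows "way_below \<F> fle (basic_step b W) f"
  unfolding way_below_def
proof (intro conjI allI impI f)
  have b: "b \<in> D" using b_c unfolding way_below_def by auto
  show "basic_step b W \<in> \<F>" using basic_step_mem[OF b W] .
  fix G g assume G: "directed_in \<F> fle G" and g: "is_lub \<F> fle G g" and fg: "fle f g"
  have GF: "G \<subseteq> \<F>" "G \<noteq> {}" using G unfolding directed_in_def by auto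
  define U where "U h = {z\<in>Xhat \<Omega>. way_below D le b (h z)}" for h
  have U_mono: "U h1 \<subseteq> U h2" if h: "h2 \<in> G" "fle h1 h2" for h1 h2
  proof
    fix z assume "z \<in> U h1"
    then have "z \<in> Xhat \<Omega>" "way_below D le b (h1 z)" unfolding U_def by auto
    moreover from this have "le (h1 z) (h2 z)" "h2 z \<in> D"
      using h GF fun_space_val unfolding fun_le_def by blast+
    ultimately show "z \<in> U h2" using way_below_le_trans[OF D_poset] unfolding U_def by blast
  qed
  have cover: "Oset \<Omega> (downset \<Omega> W) \<subseteq> \<Union>(U ` G)"
    using directed_way_above_cover[OF G g fg b_c above Oset_subset_Xhat] unfolding U_def .
  have opens: "\<forall>S\<in>U ` G. Xhat_open \<Omega> S"
    using Xhat_open_way_above_preimage[OF _ b] GF unfolding U_def by blast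
  have dir: "\<exists>R\<in>U ` G. S \<subseteq> R \<and> T \<subseteq> R" if ST: "S \<in> U ` G" "T \<in> U ` G" for S T
  proof -
    obtain h1 h2 where "h1 \<in> G" "h2 \<in> G" "S = U h1" "T = U h2" using ST by blast
    moreover from this obtain h where "h \<in> G" "fle h1 h" "fle h2 h"
      using G unfolding directed_in_def by meson
    ultimately show ?thesis using U_mono by blast
  qed
  have "U ` G \<noteq> {}" using GF by blast
  then obtain S where "S \<in> U ` G" "Oset \<Omega> (downset \<Omega> W) \<subseteq> S"
    by (rule Oset_downset_compact[OF W _ opens dir cover])
  then obtain h where h: "h \<in> G" "Oset \<Omega> (downset \<Omega> W) \<subseteq> U h" by blast
  have "\<forall>z\<in>Oset \<Omega> (downset \<Omega> W). le b (h z)"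
    using h(2) way_below_imp_le[OF D_poset] unfolding U_def by blast
  then have "fle (basic_step b W) h" using basic_step_le[OF b] h(1) GF by blast
  with h show "\<exists>h\<in>G. fle (basic_step b W) h" by blast
qed

lemma way_below_basic_step_exists:
  assumes f: "f \<in> \<F>" and y: "y \<in> Xhat \<Omega>" and b: "way_below D le b (f y)"
  obtains W where "W \<in> \<Omega>" "y \<in> Oset \<Omega> (downset \<Omega> W)" "way_below \<F> fle (basic_step b W) f"
proof -
  obtain c where c: "c \<in> D" "way_below D le b c" "way_below D le c (f y)"
    using way_below_interpolate[OF bc_domain_continuous[OF bc] b] by blast
  obtain I where I: "I \<in> ideals \<Omega>" "{z\<in>Xhat \<Omega>. way_below D le c (f z)} = Oset \<Omega> I"
    using Xhat_open_way_above_preimage[OF f c(1)] unfolding Xhat_open_def by blast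
  have "y \<in> Oset \<Omega> I" using I(2) y c(3) by blast
  then obtain W where W: "W \<in> I" "y \<in> Oset \<Omega> (downset \<Omega> W)" by (rule Oset_downset_cover[OF I(1)])
  have WO: "W \<in> \<Omega>" using W(1) idealsD(2)[OF I(1)] by blast
  have "Oset \<Omega> (downset \<Omega> W) \<subseteq> Oset \<Omega> I" using Oset_downset_subset_iff[OF WO I(1)] W(1) by blast
  then have "\<forall>z\<in>Oset \<Omega> (downset \<Omega> W). way_below D le c (f z)" using I(2) by blast
  with basic_step_way_below[OF f WO c(2)] WO W(2) that show thesis by blast
qed

lemma basis_hatI:
  assumes "finite I" "consistent_family \<Omega> D le I b (\<lambda>i. Oset \<Omega> (downset \<Omega> (W i)))"
    "\<forall>i\<in>I. W i \<in> \<Omega> \<and> b i \<in> D0"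
  shows "step_join \<Omega> D le (I :: nat set) b (\<lambda>i. Oset \<Omega> (downset \<Omega> (W i))) \<in> basis_hat \<Omega> D le D0"
  using assms unfolding basis_hat_def by blast

lemma basis_hatE:
  assumes "f \<in> basis_hat \<Omega> D le D0"
  obtains I :: "nat set" and b W where "f = step_join \<Omega> D le I b (\<lambda>i. Oset \<Omega> (downset \<Omega> (W i)))"
    "finite I" "consistent_family \<Omega> D le I b (\<lambda>i. Oset \<Omega> (downset \<Omega> (W i)))"
    "\<forall>i\<in>I. W i \<in> \<Omega> \<and> b i \<in> D0"
  using assms unfolding basis_hat_def by blast

lemma consistent_family_if_bounded:
  assumes u: "u \<in> \<F>" and below: "\<forall>i\<in>I. fle (step_fun \<Omega> D le (b i) (Ob i)) u"
  shows "consistent_family \<Omega> D le I b Ob"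
  unfolding consistent_family_def
proof (intro allI impI)
  fix J assume J: "J \<subseteq> I" "{y\<in>Xhat \<Omega>. \<forall>j\<in>J. y \<in> Ob j} \<noteq> {}"
  then obtain y where y: "y \<in> Xhat \<Omega>" "\<forall>j\<in>J. y \<in> Ob j" by blast
  have "le (b j) (u y)" if "j \<in> J" for j
  proof -
    have "le (step_fun \<Omega> D le (b j) (Ob j) y) (u y)" using below J(1) that y(1) unfolding fun_le_def by blast
    then show ?thesis using that y unfolding step_fun_def by simp
  qed
  then show "\<exists>v\<in>D. \<forall>j\<in>J. le (b j) v" using fun_space_val[OF u y(1)] by blast
qed

text \<open>Elements of \<open>basis_hat\<close> are just the joins of finite sets of basic step functions; the
  consistency condition amounts to the existence of the join.\<close>

lemma basis_hat_is_lub: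
  assumes D0: "D0 \<subseteq> D" and f: "f \<in> basis_hat \<Omega> D le D0"
  shows "\<exists>P. finite P \<and> P \<subseteq> D0 \<times> \<Omega> \<and> is_lub \<F> fle (basic_steps P) f"
proof -
  obtain I :: "nat set" and b W where f: "f = step_join \<Omega> D le I b (\<lambda>i. Oset \<Omega> (downset \<Omega> (W i)))"
    "finite I" "consistent_family \<Omega> D le I b (\<lambda>i. Oset \<Omega> (downset \<Omega> (W i)))"
    "\<forall>i\<in>I. W i \<in> \<Omega> \<and> b i \<in> D0"
    using f by (rule basis_hatE)
  define P where "P = (\<lambda>i. (b i, W i)) ` I"
  have "basic_steps P = (\<lambda>i. basic_step (b i) (W i)) ` I"
    unfolding P_def image_image by simp
  moreover have "\<forall>i\<in>I. b i \<in> D \<and> Oset \<Omega> (downset \<Omega> (W i)) \<in> Oset \<Omega> ` ideals \<Omega>"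
    using f(4) D0 downset_ideal by blast
  ultimately have "is_lub \<F> fle (basic_steps P) f"
    using is_lub_step_join[OF _ f(3)] unfolding f(1) by simp
  moreover have "finite P" "P \<subseteq> D0 \<times> \<Omega>" using f(2,4) unfolding P_def by auto
  ultimately show ?thesis by blast
qed

lemma basis_hat_if_is_lub:
  assumes D0: "D0 \<subseteq> D" and P: "finite P" "P \<subseteq> D0 \<times> \<Omega>" and lub: "is_lub \<F> fle (basic_steps P) f"
  shows "f \<in> basis_hat \<Omega> D le D0"
proof -
  obtain e where e: "bij_betw e {0..<card P} P" using ex_bij_betw_nat_finite[OF P(1)] by blast
  define I where "I = {0..<card P}"
  define b where "b = fst \<circ> e"
  define W where "W = snd \<circ> e"
  have enum: "(\<lambda>i. (b i, W i)) ` I = P"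
    using bij_betw_imp_surj_on[OF e] unfolding I_def b_def W_def by simp
  then have img: "(\<lambda>i. basic_step (b i) (W i)) ` I = basic_steps P"
    by (auto simp: image_image)
  have mem: "\<forall>i\<in>I. W i \<in> \<Omega> \<and> b i \<in> D0" using enum P(2) by auto
  have fF: "f \<in> \<F>" using lub unfolding is_lub_def by blast
  have "\<forall>i\<in>I. fle (basic_step (b i) (W i)) f" using lub img unfolding is_lub_def by blast
  then have cons: "consistent_family \<Omega> D le I b (\<lambda>i. Oset \<Omega> (downset \<Omega> (W i)))"
    by (rule consistent_family_if_bounded[OF fF])
  have "\<forall>i\<in>I. b i \<in> D \<and> Oset \<Omega> (downset \<Omega> (W i)) \<in> Oset \<Omega> ` ideals \<Omega>"
    using mem D0 downset_ideal by blast
  then have "is_lub \<F> fle (basic_steps P) (step_join \<Omega> D le I b (\<lambda>i. Oset \<Omega> (downset \<Omega> (W i))))"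
    using is_lub_step_join[OF _ cons] img by simp
  then have "f = step_join \<Omega> D le I b (\<lambda>i. Oset \<Omega> (downset \<Omega> (W i)))"
    by (rule is_lub_unique[OF fun_space_poset lub])
  moreover have "finite I" unfolding I_def by simp
  ultimately show ?thesis using basis_hatI[OF _ cons mem] by simp
qed

lemma basis_hat_iff:
  "D0 \<subseteq> D \<Longrightarrow> f \<in> basis_hat \<Omega> D le D0 \<longleftrightarrow>
    (\<exists>P. finite P \<and> P \<subseteq> D0 \<times> \<Omega> \<and> is_lub \<F> fle (basic_steps P) f)"
  using basis_hat_is_lub basis_hat_if_is_lub by blast

lemma basis_hat_subset: "D0 \<subseteq> D \<Longrightarrow> basis_hat \<Omega> D le D0 \<subseteq> \<F>"
  using basis_hat_iff unfolding is_lub_def by blast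

lemma basic_step_mem_basis_hat:
  assumes "D0 \<subseteq> D" "b \<in> D0" "W \<in> \<Omega>"
  shows "basic_step b W \<in> basis_hat \<Omega> D le D0"
proof -
  have "is_lub \<F> fle (basic_steps {(b, W)}) (basic_step b W)"
    using is_lub_singleton[OF fun_space_poset basic_step_mem] assms by auto
  then show ?thesis using basis_hat_iff[OF assms(1)] assms(2,3) by blast
qed

lemma basis_hat_least:
  assumes "D0 \<subseteq> D"
  obtains a where "a \<in> basis_hat \<Omega> D le D0" "\<forall>f\<in>\<F>. fle a f"
proof -
  obtain a where a: "a \<in> \<F>" "\<forall>f\<in>\<F>. fle a f" using fun_space_bot by blast
  then have "is_lub \<F> fle (basic_steps {}) a" unfolding is_lub_def by simp
  then have "a \<in> basis_hat \<Omega> D le D0" using basis_hat_iff[OF assms] by blast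
  with a that show thesis by blast
qed

lemma basis_hat_bounded_join:
  assumes D0: "D0 \<subseteq> D" and a: "a1 \<in> basis_hat \<Omega> D le D0" "a2 \<in> basis_hat \<Omega> D le D0"
    and f: "f \<in> \<F>" "fle a1 f" "fle a2 f"
  obtains a where "a \<in> basis_hat \<Omega> D le D0" "is_lub \<F> fle {a1, a2} a"
proof -
  have st_sub: "basic_steps P \<subseteq> \<F>" if "P \<subseteq> D0 \<times> \<Omega>" for P
    using that basic_step_mem D0 by auto
  have bounded: "\<forall>s\<in>basic_steps P. fle s f"
    if "P \<subseteq> D0 \<times> \<Omega>" "is_lub \<F> fle (basic_steps P) a" "fle a f" for P a
  proof
    fix s assume "s \<in> basic_steps P"
    moreover have "a \<in> \<F>" using that(2) unfolding is_lub_def by blast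
    ultimately show "fle s f"
      using that st_sub poset_trans[OF fun_space_poset, of s a f] f(1) unfolding is_lub_def by blast
  qed
  obtain P1 where P1: "finite P1" "P1 \<subseteq> D0 \<times> \<Omega>" "is_lub \<F> fle (basic_steps P1) a1"
    using a(1) unfolding basis_hat_iff[OF D0] by blast
  obtain P2 where P2: "finite P2" "P2 \<subseteq> D0 \<times> \<Omega>" "is_lub \<F> fle (basic_steps P2) a2"
    using a(2) unfolding basis_hat_iff[OF D0] by blast
  have "basic_steps P1 \<union> basic_steps P2 \<subseteq> \<F>" using st_sub[OF P1(2)] st_sub[OF P2(2)] by (rule Un_least)
  moreover have "\<forall>s\<in>basic_steps P1 \<union> basic_steps P2. fle s f"
    using bounded[OF P1(2,3) f(2)] bounded[OF P2(2,3) f(3)] by blast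
  ultimately obtain a where a3: "is_lub \<F> fle (basic_steps (P1 \<union> P2)) a"
    unfolding image_Un using fun_space_bounded_lub[OF _ f(1)] by blast
  have "finite (P1 \<union> P2)" "P1 \<union> P2 \<subseteq> D0 \<times> \<Omega>" using P1 P2 by auto
  with a3 have "a \<in> basis_hat \<Omega> D le D0" unfolding basis_hat_iff[OF D0] by blast
  moreover have "is_lub \<F> fle {a1, a2} a"
    using is_lub_pair_of_Un[OF fun_space_poset P1(3) P2(3)] a3 st_sub P1(2) P2(2)
    unfolding image_Un by blast
  ultimately show thesis by (rule that)
qed

lemma directed_basis_hat_way_below:
  assumes D0: "D0 \<subseteq> D" and f: "f \<in> \<F>"
  shows "directed_in \<F> fle {a\<in>basis_hat \<Omega> D le D0. way_below \<F> fle a f}"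
  unfolding directed_in_def
proof (intro conjI ballI)
  let ?A = "{a\<in>basis_hat \<Omega> D le D0. way_below \<F> fle a f}"
  note fpo = fun_space_poset
  show "?A \<subseteq> \<F>" using basis_hat_subset[OF D0] by blast
  obtain a where "a \<in> basis_hat \<Omega> D le D0" "\<forall>g\<in>\<F>. fle a g" using basis_hat_least[OF D0] .
  then have "a \<in> ?A" using way_below_least[OF fpo] basis_hat_subset[OF D0] f by blast
  then show "?A \<noteq> {}" by blast
  fix a1 a2 assume a12: "a1 \<in> ?A" "a2 \<in> ?A"
  then have "fle a1 f" "fle a2 f" using way_below_imp_le[OF fpo] by blast+
  then obtain a where a: "a \<in> basis_hat \<Omega> D le D0" "is_lub \<F> fle {a1, a2} a"
    using basis_hat_bounded_join[OF D0 _ _ f] a12 by blast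
  then have "way_below \<F> fle a f" using way_below_lub2[OF fpo] a12 by blast
  moreover have "fle a1 a" "fle a2 a" using a(2) unfolding is_lub_def by blast+
  ultimately show "\<exists>z\<in>?A. fle a1 z \<and> fle a2 z" using a(1) by blast
qed

lemma is_lub_basis_hat_way_below:
  assumes D0: "domain_basis D le D0" and f: "f \<in> \<F>"
  shows "is_lub \<F> fle {a\<in>basis_hat \<Omega> D le D0. way_below \<F> fle a f} f"
  unfolding is_lub_def
proof (intro conjI ballI impI f)
  have D0D: "D0 \<subseteq> D" using D0 unfolding domain_basis_def by blast
  let ?A = "{a\<in>basis_hat \<Omega> D le D0. way_below \<F> fle a f}"
  show "fle a f" if "a \<in> ?A" for a using that way_below_imp_le[OF fun_space_poset] by blast
  fix u assume u: "u \<in> \<F>" "\<forall>a\<in>?A. fle a u"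
  show "fle f u"
    unfolding fun_le_def
  proof
    fix y assume y: "y \<in> Xhat \<Omega>"
    have "le b (u y)" if b: "b \<in> D0" "way_below D le b (f y)" for b
    proof -
      obtain W where W: "W \<in> \<Omega>" "y \<in> Oset \<Omega> (downset \<Omega> W)" "way_below \<F> fle (basic_step b W) f"
        using way_below_basic_step_exists[OF f y b(2)] .
      then have "fle (basic_step b W) u" using u basic_step_mem_basis_hat[OF D0D b(1)] by blast
      then have "le (basic_step b W y) (u y)" using y unfolding fun_le_def by blast
      then show ?thesis using y W(2) unfolding step_fun_def by simp
    qed
    then show "le (f y) (u y)"
      using D0 fun_space_val[OF f y] fun_space_val[OF u(1) y] unfolding domain_basis_def is_lub_def
      by blast
  qed
qed

lemma fun_space_domain_basis:
  assumes D0: "domain_basis D le D0"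
  shows "domain_basis \<F> fle (basis_hat \<Omega> D le D0)"
proof -
  have "D0 \<subseteq> D" using D0 unfolding domain_basis_def by blast
  then show ?thesis
    unfolding domain_basis_def
    using basis_hat_subset directed_basis_hat_way_below is_lub_basis_hat_way_below[OF D0] by blast
qed

lemma countable_basis_hat:
  assumes "D0 \<subseteq> D" "countable \<Omega>" "countable D0"
  shows "countable (basis_hat \<Omega> D le D0)"
proof -
  have sub: "basis_hat \<Omega> D le D0 \<subseteq> (\<lambda>P. dlub \<F> fle (basic_steps P)) ` {P. finite P \<and> P \<subseteq> D0 \<times> \<Omega>}"
  proof
    fix f assume "f \<in> basis_hat \<Omega> D le D0"
    then obtain P where "finite P" "P \<subseteq> D0 \<times> \<Omega>" "is_lub \<F> fle (basic_steps P) f"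
      unfolding basis_hat_iff[OF assms(1)] by blast
    moreover from this have "f = dlub \<F> fle (basic_steps P)" using dlub_eqI[OF fun_space_poset] by simp
    ultimately show "f \<in> (\<lambda>P. dlub \<F> fle (basic_steps P)) ` {P. finite P \<and> P \<subseteq> D0 \<times> \<Omega>}"
      by blast
  qed
  have "countable (D0 \<times> \<Omega>)" using assms(2,3) by simp
  then have "countable {P. finite P \<and> P \<subseteq> D0 \<times> \<Omega>}" by (rule countable_Collect_finite_subset)
  then show ?thesis by (rule countable_subset[OF sub countable_image])
qed

lemma fun_space_bc_domain: "bc_domain \<F> fle"
proof -
  have "domain_basis D le D"
    using continuous_dcpo_approx[OF bc_domain_continuous[OF bc]] unfolding domain_basis_def by blast
  then have "continuous_dcpo \<F> fle"
    using continuous_dcpo_if_basis[OF fun_space_poset fun_space_dcpo fun_space_domain_basis] by blast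
  then show ?thesis
    unfolding bc_domain_def using fun_space_dcpo fun_space_bot fun_space_bounded_lub by blast
qed

end

theorem mainTheorem16:
  fixes T :: "'a topology" and \<Omega> :: "'a set set"
    and D :: "'d set" and le :: "'d \<Rightarrow> 'd \<Rightarrow> bool" and D0 :: "'d set"
  assumes "viable_base T \<Omega>"
    and "bc_domain D le"
    and "domain_basis D le D0"
  shows "bc_domain (fun_space \<Omega> D le) (fun_le \<Omega> le)
       \<and> domain_basis (fun_space \<Omega> D le) (fun_le \<Omega> le) (basis_hat \<Omega> D le D0)
       \<and> (countable \<Omega> \<and> omega_continuous D le \<longrightarrow>
            omega_continuous (fun_space \<Omega> D le) (fun_le \<Omega> le))"
proof -
  interpret fun_space_setting \<Omega> D le
    using assms(1,2) by unfold_locales (auto simp: viable_base_def)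
  have "omega_continuous \<F> fle" if \<Omega>: "countable \<Omega>" and D: "omega_continuous D le"
  proof -
    obtain B where B: "countable B" "domain_basis D le B"
      using D unfolding omega_continuous_def by blast
    then have "B \<subseteq> D" unfolding domain_basis_def by blast
    then show ?thesis
      using fun_space_dcpo fun_space_domain_basis[OF B(2)] countable_basis_hat \<Omega> B(1)
      unfolding omega_continuous_def by blast
  qed
  then show ?thesis using fun_space_bc_domain fun_space_domain_basis[OF assms(3)] by blast
qed

end
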